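(* Let $F(X)=c_0+\cdots+c_{d-1}X^{d-1}+X^d\in\mathbb{Z}[X]$ be monic irreducible with fixed root $\xi$, $L=\mathbb{Q}(\xi)$ Galois of degree $d$ over $\mathbb{Q}$ with group $G$. Let $\mathbf{a}=(a_i)_{i\ge0}$ be a sequence of rational numbers with $a_{n+d}=-\sum_{k=0}^{d-1}c_ka_{n+k}$ for all $n\ge0$, and let $K$ be a conjugacy class of $G$ with characteristic function $\phi_K:G\to\mathbb{Q}$. Suppose $\Phi(\Psi(\mathbf{a}))=\phi_K$, where $\Psi(\mathbf{a})=\sum_{\sigma\in G}z_\sigma\otimes\sigma^{-1}\xi$ with $[z_\sigma]_{\sigma\in G}=P^{-1}[a_0,\dots,a_{d-1}]^t$, $P=[\sigma^{-1}(\xi^{i-1})]_{1\le i\le d,\sigma\in G}$, and $\Phi(\gamma\otimes\alpha)(\tau)=\gamma\cdot\tau(\alpha)$. Then for all but finitely many primes $p$, $a_p$ is $p$-integral and $a_p\equiv\phi_K(\mathrm{Frob}_p)\pmod p$.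
   Context: Matrices indexed by $G$ use a fixed total order on $G$. For a prime $p$ unramified in $L$, $\mathrm{Frob}_p$ is the conjugacy class of Frobenius automorphisms of primes above $p$, and $\phi_K(\mathrm{Frob}_p)$ is $1$ if this class is $K$ and $0$ otherwise. *)

theory Defs
  imports Complex_Main "HOL-Computational_Algebra.Computational_Algebra"
begin

definition QL :: "complex \<Rightarrow> complex set" where
  "QL \<xi> = {poly (map_poly of_rat q) \<xi> | q :: rat poly. True}"

text \<open>Gal(L/Q) = field automorphisms of L, extended by the identity outside L
  (so that they are determined as functions complex => complex).\<close>
definition Aut_L :: "complex \<Rightarrow> (complex \<Rightarrow> complex) set" where
  "Aut_L \<xi> = {\<sigma>. bij_betw \<sigma> (QL \<xi>) (QL \<xi>) \<and>
      (\<forall>x\<in>QL \<xi>. \<forall>y\<in>QL \<xi>. \<sigma> (x + y) = \<sigma> x + \<sigma> y \<and> \<sigma> (x * y) = \<sigma> x * \<sigma> y) \<and>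
      \<sigma> 1 = 1 \<and> (\<forall>x. x \<notin> QL \<xi> \<longrightarrow> \<sigma> x = x)}"

definition conj_class :: "(complex \<Rightarrow> complex) set \<Rightarrow> (complex \<Rightarrow> complex) set \<Rightarrow> bool" where
  "conj_class G K \<longleftrightarrow> (\<exists>g\<in>G. K = {h \<circ> g \<circ> inv h | h. h \<in> G})"

definition alg_int :: "complex \<Rightarrow> bool" where
  "alg_int x \<longleftrightarrow> (\<exists>q :: int poly. lead_coeff q = 1 \<and> poly (map_poly of_int q) x = 0)"

definition OL :: "complex \<Rightarrow> complex set" where
  "OL \<xi> = {x \<in> QL \<xi>. alg_int x}"

definition is_ideal_OL :: "complex \<Rightarrow> complex set \<Rightarrow> bool" where
  "is_ideal_OL \<xi> I \<longleftrightarrow> I \<subseteq> OL \<xi> \<and> 0 \<in> I \<and> (\<forall>x\<in>I. \<forall>y\<in>I. x + y \<in> I) \<and>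
     (\<forall>x\<in>I. - x \<in> I) \<and> (\<forall>r\<in>OL \<xi>. \<forall>x\<in>I. r * x \<in> I)"

definition prime_ideal_OL :: "complex \<Rightarrow> complex set \<Rightarrow> bool" where
  "prime_ideal_OL \<xi> P \<longleftrightarrow> is_ideal_OL \<xi> P \<and> P \<noteq> OL \<xi> \<and> P \<noteq> {0} \<and>
     (\<forall>x\<in>OL \<xi>. \<forall>y\<in>OL \<xi>. x * y \<in> P \<longrightarrow> x \<in> P \<or> y \<in> P)"

definition ideal_prod_OL :: "complex set \<Rightarrow> complex set \<Rightarrow> complex set" where
  "ideal_prod_OL I J = {(\<Sum>i<n. f i * g i) | (n::nat) f g. \<forall>i<n. f i \<in> I \<and> g i \<in> J}"

text \<open>p is unramified in L: no prime P above p has e(P|p) >= 2, i.e. pO_L is not in P^2.\<close>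
definition unramified :: "complex \<Rightarrow> nat \<Rightarrow> bool" where
  "unramified \<xi> p \<longleftrightarrow> (\<forall>P. prime_ideal_OL \<xi> P \<and> of_nat p \<in> P \<longrightarrow> of_nat p \<notin> ideal_prod_OL P P)"

text \<open>Frob_p: the set of Frobenius automorphisms of the primes P above p.\<close>
definition frob_class :: "complex \<Rightarrow> nat \<Rightarrow> (complex \<Rightarrow> complex) set" where
  "frob_class \<xi> p = {\<sigma> \<in> Aut_L \<xi>. \<exists>P. prime_ideal_OL \<xi> P \<and> of_nat p \<in> P \<and>
       (\<forall>x\<in>OL \<xi>. \<sigma> x - x ^ p \<in> P)}"

definition p_integral :: "nat \<Rightarrow> rat \<Rightarrow> bool" where
  "p_integral p r \<longleftrightarrow> \<not> int p dvd snd (quotient_of r)"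

definition rat_cong_mod :: "nat \<Rightarrow> rat \<Rightarrow> rat \<Rightarrow> bool" where
  "rat_cong_mod p r s \<longleftrightarrow> p_integral p (r - s) \<and> int p dvd fst (quotient_of (r - s))"

end

(* If \<sigma> is a Frobenius automorphism at a prime P above p, i.e. \<sigma> x = x^p (mod P) on O_L,
   then the closed form a_n = \<Sum>_\<tau> z_\<tau> (inv \<tau> \<xi>)^n of the recurrence sequence gives
     a_p - \<phi>_K(\<sigma>) = \<Sum>_\<tau> z_\<tau> ((inv \<tau> \<xi>)^p - \<sigma> (inv \<tau> \<xi>)) = 0 (mod P),
   a congruence between rationals that descends to a congruence modulo p.
   Excluding the primes that divide the denominators of the a_n and of the z_\<tau>, a bound D for
   the index of \<int>[\<xi>] in O_L and an integer E in F'(\<xi>) \<int>[\<xi>], every prime P above p has a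
   Frobenius automorphism, those for the various P form one conjugacy class (so Frob_p = K or
   Frob_p is disjoint from K), and p is unramified. *)

theory Submission
  imports Defs "Jordan_Normal_Form.Char_Poly" "HOL-Computational_Algebra.Field_as_Ring"
begin

unbundle no m_inv_syntax

lemma poly_sum_coeff_less:
  fixes x :: "'a::comm_semiring_1"
  assumes "degree p < n"
  shows "poly p x = (\<Sum>i<n. coeff p i * x ^ i)"
  unfolding poly_altdef
  by (rule sum.mono_neutral_left) (use assms in \<open>auto simp: coeff_eq_0\<close>)

lemma monic_root_power_degree:
  fixes f :: "int poly" and x :: complex
  assumes "lead_coeff f = 1" "poly (of_int_poly f) x = 0"
  shows "x ^ degree f = - (\<Sum>i<degree f. of_int (coeff f i) * x ^ i)"
proof -
  have "0 = (\<Sum>i\<le>degree f. of_int (coeff f i) * x ^ i)"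
    using assms(2) by (simp add: poly_altdef degree_map_poly)
  also have "\<dots> = (\<Sum>i<degree f. of_int (coeff f i) * x ^ i) + x ^ degree f"
    using assms(1) by (simp add: lessThan_Suc_atMost[symmetric])
  finally show ?thesis by (simp add: eq_neg_iff_add_eq_0 add.commute)
qed

lemma monic_root_degree_pos:
  assumes "lead_coeff f = 1" "poly (of_int_poly f :: complex poly) x = 0"
  shows "degree f > 0"
proof (rule ccontr)
  assume "\<not> degree f > 0"
  hence "f = [:1:]" using assms(1) degree_0_id[of f] by simp
  thus False using assms(2) by simp
qed

abbreviation of_rat_poly :: "rat poly \<Rightarrow> complex poly" where
  "of_rat_poly \<equiv> map_poly of_rat"

lemma of_rat_poly_of_int_poly: "of_rat_poly (of_int_poly p) = of_int_poly p"
  by (simp add: map_poly_map_poly o_def)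

lemma of_rat_poly_mult: "of_rat_poly (p * q) = of_rat_poly p * of_rat_poly q"
  by (induction p) (simp_all add: hom_distribs)

lemma rat_poly_clear_denominators:
  fixes q :: "rat poly"
  obtains N :: int and A :: "int poly" where "N > 0" "of_int_poly A = Polynomial.smult (of_int N) q"
proof (induction q arbitrary: thesis)
  case 0 thus ?case using 0[of 1 0] by simp
next
  case (pCons c q)
  obtain N A where N: "N > 0" "of_int_poly A = Polynomial.smult (of_int N) q" using pCons.IH
    by blast
  obtain a b where ab: "quotient_of c = (a, b)" by (cases "quotient_of c")
  have b: "b > 0" and c: "c = of_int a / of_int b"
    using quotient_of_denom_pos[OF ab] quotient_of_div[OF ab] .
  have "of_int_poly (pCons (a * N) (Polynomial.smult b A))
      = Polynomial.smult (of_int (N * b)) (pCons c q)"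
    using N(2) b c by (simp add: hom_distribs field_simps)
  thus ?case using pCons.prems[of "N * b" "pCons (a * N) (Polynomial.smult b A)"] N(1) b by simp
qed

lemma rat_common_denominator:
  fixes A :: "rat set"
  assumes "finite A"
  obtains N :: int where "N > 0" "\<forall>r\<in>A. of_int N * r \<in> \<int>"
proof
  let ?N = "\<Prod>r\<in>A. snd (quotient_of r)"
  show "?N > 0" by (intro prod_pos) (auto intro: quotient_of_denom_pos')
  show "\<forall>r\<in>A. of_int ?N * r \<in> \<int>"
  proof
    fix r assume r: "r \<in> A"
    obtain a b where ab: "quotient_of r = (a, b)" by (cases "quotient_of r")
    obtain e where e: "?N = b * e"
      using dvd_prodI[OF assms r, of "\<lambda>r. snd (quotient_of r)"] ab by auto
    have "b > 0" using quotient_of_denom_pos[OF ab] .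
    hence "of_int ?N * r = of_int (e * a)" using quotient_of_div[OF ab] e by (simp add: field_simps)
    thus "of_int ?N * r \<in> \<int>" by simp
  qed
qed

lemma monic_int_poly_rat_root_Ints:
  fixes r :: rat
  assumes q: "lead_coeff q = 1" "poly (of_int_poly q) r = 0"
  shows "r \<in> \<int>"
proof -
  obtain a b where ab: "quotient_of r = (a, b)" by (cases "quotient_of r")
  have b: "b > 0" and r: "r = of_int a / of_int b" and cop: "coprime a b"
    using quotient_of_denom_pos[OF ab] quotient_of_div[OF ab] quotient_of_coprime[OF ab] .
  define n where "n = degree q"
  have "0 = of_int b ^ n * (\<Sum>i\<le>n. of_int (coeff q i) * r ^ i)"
    using q(2) by (simp add: poly_altdef n_def degree_map_poly)
  also have "\<dots> = (\<Sum>i\<le>n. of_int (coeff q i * a ^ i * b ^ (n - i)))"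
    unfolding sum_distrib_left
  proof (rule sum.cong)
    fix i assume "i \<in> {..n}"
    hence "(of_int b :: rat) ^ n * r ^ i = (of_int b * r) ^ i * of_int b ^ (n - i)"
      by (simp add: power_mult_distrib flip: power_add)
    also have "of_int b * r = of_int a" using b r by simp
    finally show "of_int b ^ n * (of_int (coeff q i) * r ^ i)
        = (of_int (coeff q i * a ^ i * b ^ (n - i)) :: rat)" by simp
  qed simp
  also have "\<dots> = of_int (\<Sum>i\<le>n. coeff q i * a ^ i * b ^ (n - i))" by simp
  finally have "(\<Sum>i\<le>n. coeff q i * a ^ i * b ^ (n - i)) = 0" by linarith
  moreover have "(\<Sum>i\<le>n. coeff q i * a ^ i * b ^ (n - i))
      = (\<Sum>i<n. coeff q i * a ^ i * b ^ (n - i)) + a ^ n"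
    using q(1) by (simp add: lessThan_Suc_atMost[symmetric] n_def)
  ultimately have an: "a ^ n = - (\<Sum>i<n. coeff q i * a ^ i * b ^ (n - i))" by simp
  have "b dvd (\<Sum>i<n. coeff q i * a ^ i * b ^ (n - i))"
    by (intro dvd_sum) (simp add: dvd_power dvd_mult)
  hence "b dvd a ^ n" using an by simp
  moreover have "coprime (a ^ n) b" using cop by simp
  ultimately have "is_unit b" by (metis coprime_common_divisor dvd_refl)
  thus ?thesis using b r by simp
qed

lemma quotient_of_int_div:
  fixes m n :: int
  assumes n: "n \<noteq> 0" and ab: "quotient_of (of_int m / of_int n) = (a, b)"
  shows "b dvd n" "m * b = a * n"
proof -
  have b: "b > 0" using quotient_of_denom_pos[OF ab] .
  have "(of_int m / of_int n :: rat) = of_int a / of_int b" using quotient_of_div[OF ab] .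
  thus e: "m * b = a * n" using n b by (simp add: field_simps) (metis of_int_eq_iff of_int_mult)
  hence "b dvd a * n" by (metis dvd_triv_right)
  thus "b dvd n" using quotient_of_coprime[OF ab]
    by (simp add: coprime_dvd_mult_right_iff coprime_commute)
qed

lemma p_integral_int_div:
  assumes n: "\<not> int p dvd n"
  shows "p_integral p (of_int m / of_int n)"
proof -
  obtain a b where ab: "quotient_of (of_int m / of_int n) = (a, b)" by (metis surj_pair)
  have "n \<noteq> 0" using n by auto
  hence "b dvd n" using quotient_of_int_div(1)[OF _ ab] by blast
  thus ?thesis unfolding p_integral_def ab using n dvd_trans by auto
qed

lemma rat_cong_modI:
  assumes p: "prime p" and n: "\<not> int p dvd n" and m: "int p dvd m"
    and rs: "r - s = of_int m / of_int n"
  shows "rat_cong_mod p r s"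
proof -
  obtain a b where ab: "quotient_of (of_int m / of_int n) = (a, b)" by (metis surj_pair)
  have "n \<noteq> 0" using n by auto
  hence "int p dvd a * n" using quotient_of_int_div(2)[OF _ ab] m by (metis dvd_mult2)
  hence "int p dvd a" using n p prime_dvd_mult_iff[of "int p"] by simp
  thus ?thesis unfolding rat_cong_mod_def rs using p_integral_int_div[OF n] ab by simp
qed

lemma finite_prime_divisors_int:
  assumes "M \<noteq> 0"
  shows "finite {p. prime p \<and> int p dvd M}"
proof (rule finite_subset)
  show "{p. prime p \<and> int p dvd M} \<subseteq> {..nat \<bar>M\<bar>}"
  proof
    fix p assume "p \<in> {p. prime p \<and> int p dvd M}"
    hence "\<bar>int p\<bar> \<le> \<bar>M\<bar>" using dvd_imp_le_int[OF assms] by blast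
    thus "p \<in> {..nat \<bar>M\<bar>}" by simp
  qed
qed simp

section \<open>Algebraic integers\<close>

definition int_span :: "(nat \<Rightarrow> complex) \<Rightarrow> nat \<Rightarrow> complex set" where
  "int_span w N = {\<Sum>k<N. of_int (c k) * w k | c. True}"

lemma int_span_0: "0 \<in> int_span w N"
  unfolding int_span_def by (rule CollectI, rule exI[of _ "\<lambda>_. 0"]) simp

lemma int_span_add: "a \<in> int_span w N \<Longrightarrow> b \<in> int_span w N \<Longrightarrow> a + b \<in> int_span w N"
  unfolding int_span_def
  by clarify (rule exI[of _ "\<lambda>k. _ k + _ k"], simp add: sum.distrib distrib_right)

lemma int_span_of_int_mult: "a \<in> int_span w N \<Longrightarrow> of_int e * a \<in> int_span w N"
  unfolding int_span_def
  by clarify (rule exI[of _ "\<lambda>k. e * _ k"], simp add: sum_distrib_left mult.assoc)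

lemma int_span_sum:
  "(\<And>i. i \<in> A \<Longrightarrow> f i \<in> int_span w N) \<Longrightarrow> sum f A \<in> int_span w N"
  by (induction A rule: infinite_finite_induct) (auto intro: int_span_0 int_span_add)

lemma int_span_generator: "k < N \<Longrightarrow> w k \<in> int_span w N"
  unfolding int_span_def
  by (rule CollectI, rule exI[of _ "\<lambda>l. if l = k then 1 else 0"])
     (simp add: if_distrib[of "\<lambda>c. of_int c * _"] cong: if_cong)

lemma int_span_mult_closed:
  assumes "\<forall>k<N. t * w k \<in> int_span w N" and "z \<in> int_span w N"
  shows "t * z \<in> int_span w N"
proof -
  from assms(2) obtain c where z: "z = (\<Sum>k<N. of_int (c k) * w k)"
    unfolding int_span_def by auto
  have "t * z = (\<Sum>k<N. of_int (c k) * (t * w k))"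
    unfolding z sum_distrib_left by (simp add: algebra_simps)
  also have "\<dots> \<in> int_span w N"
    using assms(1) by (auto intro: int_span_sum int_span_of_int_mult)
  finally show ?thesis .
qed

lemma int_span_mult:
  assumes "a \<in> int_span u m" and "b \<in> int_span v n"
  shows "a * b \<in> int_span (\<lambda>k. u (k div n) * v (k mod n)) (m * n)"
proof -
  let ?w = "\<lambda>k. u (k div n) * v (k mod n)"
  obtain c e where a: "a = (\<Sum>i<m. of_int (c i) * u i)" and b: "b = (\<Sum>j<n. of_int (e j) * v j)"
    using assms unfolding int_span_def by auto
  have uv: "u i * v j \<in> int_span ?w (m * n)" if "i < m" "j < n" for i j
  proof -
    have "i * n + j < m * n"
    proof -
      have "i * n + j < Suc i * n" using that by simp
      also have "\<dots> \<le> m * n" using that by (intro mult_right_mono) auto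
      finally show ?thesis .
    qed
    thus ?thesis using int_span_generator[of "i * n + j" "m * n" ?w] that by simp
  qed
  have "a * b = (\<Sum>i<m. \<Sum>j<n. of_int (c i * e j) * (u i * v j))"
    unfolding a b sum_product by (simp add: algebra_simps)
  also have "\<dots> \<in> int_span ?w (m * n)"
    using uv by (intro int_span_sum int_span_of_int_mult) auto
  finally show ?thesis .
qed

text \<open>Multiplication by t is given on the spanning family by an integer matrix having the
  nonzero vector of generators as eigenvector for t; so t is a root of its monic characteristic
  polynomial.\<close>
lemma alg_int_if_int_span_stable:
  assumes stable: "\<forall>k<N. t * w k \<in> int_span w N" and nz: "k0 < N" "w k0 \<noteq> 0"
  shows "alg_int t"
proof -
  have "\<forall>k. \<exists>c. k < N \<longrightarrow> t * w k = (\<Sum>l<N. of_int (c l) * w l)"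
    using stable unfolding int_span_def by blast
  then obtain c where c: "\<And>k. k < N \<Longrightarrow> t * w k = (\<Sum>l<N. of_int (c k l) * w l)" by metis
  define A :: "int mat" where "A = mat N N (\<lambda>(k,l). c k l)"
  define v :: "complex vec" where "v = vec N w"
  have A: "A \<in> carrier_mat N N" unfolding A_def by simp
  have Ac: "of_int_hom.mat_hom A \<in> carrier_mat N N" using A by simp
  have "of_int_hom.mat_hom A *\<^sub>v v = t \<cdot>\<^sub>v v"
  proof (rule eq_vecI)
    fix i assume "i < dim_vec (t \<cdot>\<^sub>v v)"
    hence i: "i < N" unfolding v_def by simp
    have "(of_int_hom.mat_hom A *\<^sub>v v) $ i = (\<Sum>l<N. of_int (c i l) * w l)"
      using i unfolding A_def v_def mult_mat_vec_def scalar_prod_def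
      by (auto intro!: sum.cong simp: lessThan_atLeast0)
    also have "\<dots> = t * w i" using c[OF i] by simp
    finally show "(of_int_hom.mat_hom A *\<^sub>v v) $ i = (t \<cdot>\<^sub>v v) $ i" using i unfolding v_def by simp
  qed (simp add: v_def A_def)
  moreover have "v \<noteq> 0\<^sub>v N"
  proof
    assume "v = 0\<^sub>v N"
    hence "v $ k0 = 0" using nz by simp
    thus False using nz unfolding v_def by simp
  qed
  ultimately have "eigenvector (of_int_hom.mat_hom A) v t"
    unfolding eigenvector_def v_def using A by simp
  hence "eigenvalue (of_int_hom.mat_hom A) t" unfolding eigenvalue_def by blast
  hence "poly (char_poly (of_int_hom.mat_hom A)) t = 0"
    by (rule eigenvalue_root_char_poly[OF Ac, THEN iffD1])
  hence "poly (of_int_poly (char_poly A)) t = 0" using of_int_hom.char_poly_hom[OF A] by metis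
  moreover have "lead_coeff (char_poly A) = 1" using degree_monic_char_poly[OF A] by simp
  ultimately show ?thesis unfolding alg_int_def by blast
qed

lemma monic_root_power_in_int_span:
  fixes f :: "int poly" and x :: complex
  assumes "lead_coeff f = 1" "poly (of_int_poly f) x = 0"
  shows "x ^ i \<in> int_span (power x) (degree f)"
proof (induction i)
  case 0
  show ?case using int_span_generator monic_root_degree_pos[OF assms] by (metis power_0)
next
  case (Suc i)
  have "x * x ^ k \<in> int_span (power x) (degree f)" if "k < degree f" for k
  proof (cases "Suc k < degree f")
    case True thus ?thesis using int_span_generator[OF True, of "power x"] by simp
  next
    case False
    hence "x * x ^ k = x ^ degree f" using that by (metis Suc_lessI power_Suc)
    also have "\<dots> = (\<Sum>j<degree f. of_int (- coeff f j) * x ^ j)"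
      using monic_root_power_degree[OF assms] by (simp add: sum_negf[symmetric])
    also have "\<dots> \<in> int_span (power x) (degree f)"
      by (intro int_span_sum int_span_of_int_mult int_span_generator) simp
    finally show ?thesis .
  qed
  thus ?case using int_span_mult_closed Suc by (metis power_Suc)
qed

lemma alg_int_add_mult:
  assumes x: "alg_int x" and y: "alg_int y"
  shows alg_int_add: "alg_int (x + y)" and alg_int_mult: "alg_int (x * y)"
proof -
  from x obtain f where f: "lead_coeff f = 1" "poly (of_int_poly f) x = 0"
    unfolding alg_int_def by auto
  from y obtain g where g: "lead_coeff g = 1" "poly (of_int_poly g) y = 0"
    unfolding alg_int_def by auto
  define n where "n = degree g"
  define N where "N = degree f * n"
  define w where "w k = x ^ (k div n) * y ^ (k mod n)" for k
  have mono: "x ^ i * y ^ j \<in> int_span w N" for i j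
    unfolding w_def N_def n_def
    by (intro int_span_mult monic_root_power_in_int_span f g)
  have n: "n > 0" unfolding n_def using monic_root_degree_pos[OF g] .
  have stable_x: "x * w k \<in> int_span w N" and stable_y: "y * w k \<in> int_span w N" for k
    using mono[of "Suc (k div n)" "k mod n"] mono[of "k div n" "Suc (k mod n)"]
    unfolding w_def by (simp_all add: algebra_simps)
  have N: "0 < N" "w 0 \<noteq> 0"
    unfolding N_def w_def using n monic_root_degree_pos[OF f] by auto
  show "alg_int (x + y)"
    using N by (intro alg_int_if_int_span_stable[of N _ w 0])
      (auto simp: distrib_right intro: int_span_add stable_x stable_y)
  show "alg_int (x * y)"
    using N by (intro alg_int_if_int_span_stable[of N _ w 0])
      (auto simp: mult.assoc intro: int_span_mult_closed stable_x stable_y)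
qed

lemma alg_int_of_int: "alg_int (of_int c)"
  unfolding alg_int_def by (rule exI[of _ "[:-c, 1:]"]) simp

lemma alg_int_0: "alg_int 0" and alg_int_1: "alg_int 1"
  using alg_int_of_int[of 0] alg_int_of_int[of 1] by simp_all

lemma alg_int_minus: "alg_int x \<Longrightarrow> alg_int (- x)"
  using alg_int_mult[OF alg_int_of_int[of "-1"]] by simp

lemma alg_int_diff: "alg_int x \<Longrightarrow> alg_int y \<Longrightarrow> alg_int (x - y)"
  using alg_int_add[of x "- y"] alg_int_minus by simp

lemma alg_int_power: "alg_int x \<Longrightarrow> alg_int (x ^ n)"
  by (induction n) (auto intro: alg_int_mult alg_int_1)

lemma alg_int_sum: "(\<And>i. i \<in> A \<Longrightarrow> alg_int (f i)) \<Longrightarrow> alg_int (sum f A)"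
  by (induction A rule: infinite_finite_induct) (auto intro: alg_int_add alg_int_0)

lemma alg_int_poly: "alg_int x \<Longrightarrow> alg_int (poly (of_int_poly u) x)"
  by (induction u) (auto intro: alg_int_add alg_int_mult alg_int_of_int alg_int_0)

lemma alg_int_of_rat_Ints:
  assumes "alg_int (of_rat r)"
  shows "r \<in> \<int>"
proof -
  from assms obtain q :: "int poly"
    where q: "lead_coeff q = 1" "poly (of_int_poly q) (of_rat r :: complex) = 0"
    unfolding alg_int_def by auto
  have "of_rat (poly (of_int_poly q) r) = poly (of_rat_poly (of_int_poly q)) (of_rat r :: complex)"
    by (rule of_rat_hom.poly_map_poly[symmetric])
  thus ?thesis using q monic_int_poly_rat_root_Ints by (simp add: of_rat_poly_of_int_poly)
qed

section \<open>The number field L and its ring of integers\<close>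

lemma QL_polyI: "poly (of_rat_poly q) \<xi> \<in> QL \<xi>" unfolding QL_def by blast

lemma QL_polyE: "x \<in> QL \<xi> \<Longrightarrow> (\<And>q. x = poly (of_rat_poly q) \<xi> \<Longrightarrow> P) \<Longrightarrow> P"
  unfolding QL_def by blast

lemma QL_add: "x \<in> QL \<xi> \<Longrightarrow> y \<in> QL \<xi> \<Longrightarrow> x + y \<in> QL \<xi>"
proof (elim QL_polyE)
  fix p q assume "x = poly (of_rat_poly p) \<xi>" "y = poly (of_rat_poly q) \<xi>"
  thus "x + y \<in> QL \<xi>" using QL_polyI[of "p + q" \<xi>] by (simp add: hom_distribs)
qed

lemma QL_mult: "x \<in> QL \<xi> \<Longrightarrow> y \<in> QL \<xi> \<Longrightarrow> x * y \<in> QL \<xi>"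
proof (elim QL_polyE)
  fix p q assume "x = poly (of_rat_poly p) \<xi>" "y = poly (of_rat_poly q) \<xi>"
  thus "x * y \<in> QL \<xi>" using QL_polyI[of "p * q" \<xi>] by (simp add: of_rat_poly_mult)
qed

lemma QL_of_rat: "of_rat r \<in> QL \<xi>"
  using QL_polyI[of "[:r:]" \<xi>] by (simp add: hom_distribs)

lemma QL_of_int: "of_int r \<in> QL \<xi>"
  using QL_of_rat[of "of_int r" \<xi>] by simp

lemma QL_0: "0 \<in> QL \<xi>"
  using QL_of_int[of 0 \<xi>] by simp

lemma QL_1: "1 \<in> QL \<xi>"
  using QL_of_int[of 1 \<xi>] by simp

lemma QL_of_nat: "of_nat n \<in> QL \<xi>"
  using QL_of_int[of "int n" \<xi>] by simp

lemma QL_xi: "\<xi> \<in> QL \<xi>"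
  using QL_polyI[of "[:0,1:]" \<xi>] by simp

lemma QL_minus: "x \<in> QL \<xi> \<Longrightarrow> - x \<in> QL \<xi>"
  using QL_mult[OF QL_of_int[of "-1"]] by simp

lemma QL_diff: "x \<in> QL \<xi> \<Longrightarrow> y \<in> QL \<xi> \<Longrightarrow> x - y \<in> QL \<xi>"
  using QL_add[OF _ QL_minus] by simp

lemma QL_power: "x \<in> QL \<xi> \<Longrightarrow> x ^ n \<in> QL \<xi>"
  by (induction n) (auto intro: QL_mult QL_1)

lemma QL_sum: "(\<And>i. i \<in> A \<Longrightarrow> f i \<in> QL \<xi>) \<Longrightarrow> sum f A \<in> QL \<xi>"
  by (induction A rule: infinite_finite_induct) (auto intro: QL_add QL_0)

lemma QL_prod: "(\<And>i. i \<in> A \<Longrightarrow> f i \<in> QL \<xi>) \<Longrightarrow> prod f A \<in> QL \<xi>"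
  by (induction A rule: infinite_finite_induct) (auto intro: QL_mult QL_1)

lemma QL_poly: "x \<in> QL \<xi> \<Longrightarrow> poly (of_rat_poly q) x \<in> QL \<xi>"
  by (induction q) (auto intro!: QL_add QL_mult QL_of_rat simp: hom_distribs QL_0)

lemma QL_poly_int: "x \<in> QL \<xi> \<Longrightarrow> poly (of_int_poly q) x \<in> QL \<xi>"
  using QL_poly[of x \<xi> "of_int_poly q"] by (simp add: of_rat_poly_of_int_poly)

lemma QL_common_denominator:
  assumes "finite S" "S \<subseteq> QL \<xi>"
  shows "\<exists>N::int. N > 0 \<and> (\<forall>x\<in>S. \<exists>u. of_int N * x = poly (of_int_poly u) \<xi>)"
  using assms
proof (induction S rule: finite_induct)
  case empty thus ?case by (intro exI[of _ 1]) simp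
next
  case (insert x S)
  then obtain N where N: "N > 0" "\<forall>y\<in>S. \<exists>u. of_int N * y = poly (of_int_poly u) \<xi>" by auto
  have "x \<in> QL \<xi>" using insert.prems by simp
  then obtain q where q: "x = poly (of_rat_poly q) \<xi>" by (rule QL_polyE)
  obtain M A where MA: "M > 0" "of_int_poly A = Polynomial.smult (of_int M) q"
    by (rule rat_poly_clear_denominators)
  have "of_rat_poly (of_int_poly A) = of_rat_poly (Polynomial.smult (of_int M) q)"
    using MA(2) by simp
  hence xA: "of_int M * x = poly (of_int_poly A) \<xi>"
    unfolding q of_rat_poly_of_int_poly by (simp add: hom_distribs)
  have "\<forall>y\<in>insert x S. \<exists>u. of_int (N * M) * y = poly (of_int_poly u) \<xi>"
  proof
    fix y assume y: "y \<in> insert x S"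
    show "\<exists>u. of_int (N * M) * y = poly (of_int_poly u) \<xi>"
    proof (cases "y = x")
      case True thus ?thesis using xA
        by (intro exI[of _ "Polynomial.smult N A"]) (simp add: hom_distribs)
    next
      case False
      then obtain u where "of_int N * y = poly (of_int_poly u) \<xi>" using N(2) y by blast
      thus ?thesis
        by (intro exI[of _ "Polynomial.smult M u"]) (simp add: hom_distribs mult.left_commute)
    qed
  qed
  moreover have "N * M > 0" using N(1) MA(1) by simp
  ultimately show ?case by blast
qed

lemma OL_iff: "x \<in> OL \<xi> \<longleftrightarrow> x \<in> QL \<xi> \<and> alg_int x" unfolding OL_def by simp

lemma OL_add: "x \<in> OL \<xi> \<Longrightarrow> y \<in> OL \<xi> \<Longrightarrow> x + y \<in> OL \<xi>"
  and OL_mult: "x \<in> OL \<xi> \<Longrightarrow> y \<in> OL \<xi> \<Longrightarrow> x * y \<in> OL \<xi>"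
  and OL_diff: "x \<in> OL \<xi> \<Longrightarrow> y \<in> OL \<xi> \<Longrightarrow> x - y \<in> OL \<xi>"
  and OL_minus: "x \<in> OL \<xi> \<Longrightarrow> - x \<in> OL \<xi>"
  and OL_of_int: "of_int k \<in> OL \<xi>"
  and OL_of_nat: "of_nat n \<in> OL \<xi>"
  and OL_power: "x \<in> OL \<xi> \<Longrightarrow> x ^ n \<in> OL \<xi>"
  by (auto simp: OL_iff intro: QL_add QL_mult QL_diff QL_minus QL_of_int QL_of_nat QL_power
      alg_int_add_mult alg_int_diff alg_int_minus alg_int_of_int alg_int_power
      alg_int_of_int[of "int n", simplified])

lemma OL_0: "0 \<in> OL \<xi>" and OL_1: "1 \<in> OL \<xi>"
  using OL_of_int[of 0] OL_of_int[of 1] by simp_all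

lemma OL_sum: "(\<And>i. i \<in> A \<Longrightarrow> f i \<in> OL \<xi>) \<Longrightarrow> sum f A \<in> OL \<xi>"
  by (induction A rule: infinite_finite_induct) (auto intro: OL_add simp: OL_0)

lemma OL_prod: "(\<And>i. i \<in> A \<Longrightarrow> f i \<in> OL \<xi>) \<Longrightarrow> prod f A \<in> OL \<xi>"
  by (induction A rule: infinite_finite_induct) (auto intro: OL_mult simp: OL_1)

lemma OL_poly_int: "x \<in> OL \<xi> \<Longrightarrow> poly (of_int_poly u) x \<in> OL \<xi>"
  by (auto simp: OL_iff intro: QL_poly_int alg_int_poly)

section \<open>Automorphisms of L\<close>

locale aut =
  fixes \<xi> :: complex and \<sigma> :: "complex \<Rightarrow> complex"
  assumes aut: "\<sigma> \<in> Aut_L \<xi>"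

begin

lemma bij: "bij_betw \<sigma> (QL \<xi>) (QL \<xi>)" using aut unfolding Aut_L_def by blast

lemma add: "x \<in> QL \<xi> \<Longrightarrow> y \<in> QL \<xi> \<Longrightarrow> \<sigma> (x + y) = \<sigma> x + \<sigma> y" using aut unfolding Aut_L_def by blast

lemma mult: "x \<in> QL \<xi> \<Longrightarrow> y \<in> QL \<xi> \<Longrightarrow> \<sigma> (x * y) = \<sigma> x * \<sigma> y" using aut unfolding Aut_L_def by blast

lemma one: "\<sigma> 1 = 1" using aut unfolding Aut_L_def by blast

lemma outside: "x \<notin> QL \<xi> \<Longrightarrow> \<sigma> x = x" using aut unfolding Aut_L_def by blast

lemma QL: "x \<in> QL \<xi> \<Longrightarrow> \<sigma> x \<in> QL \<xi>" using bij bij_betwE by blast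

lemma zero: "\<sigma> 0 = 0"
  using add[OF QL_0 QL_0] by simp

lemma minus: "x \<in> QL \<xi> \<Longrightarrow> \<sigma> (- x) = - \<sigma> x"
  using add[OF QL_minus, of x x] zero by (simp add: eq_neg_iff_add_eq_0)

lemma diff: "x \<in> QL \<xi> \<Longrightarrow> y \<in> QL \<xi> \<Longrightarrow> \<sigma> (x - y) = \<sigma> x - \<sigma> y"
  using add[OF _ QL_minus, of x y] minus by simp

lemma of_nat: "\<sigma> (of_nat n) = of_nat n"
proof (induction n)
  case 0 thus ?case using zero by simp
next
  case (Suc n)
  have "\<sigma> (of_nat (Suc n)) = \<sigma> (1 + of_nat n)" by simp
  also have "\<dots> = 1 + of_nat n" using add[OF QL_1 QL_of_int[of "int n"]] one Suc by simp
  finally show ?case by simp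
qed

lemma of_int: "\<sigma> (of_int n) = of_int n"
proof (cases "n \<ge> 0")
  case True thus ?thesis using of_nat[of "nat n"] by simp
next
  case False
  have m: "of_nat (nat (-n)) \<in> QL \<xi>" by (rule QL_of_nat)
  have "\<sigma> (of_int n) = \<sigma> (- of_nat (nat (- n)))" using False by simp
  also have "\<dots> = - of_nat (nat (-n))" by (simp only: minus[OF m] of_nat)
  finally show ?thesis using False by simp
qed

lemma of_rat: "\<sigma> (of_rat r) = of_rat r"
proof -
  obtain a b where ab: "quotient_of r = (a, b)" by (cases "quotient_of r")
  have b: "b > 0" using quotient_of_denom_pos[OF ab] .
  have r: "r = of_int a / of_int b" using quotient_of_div[OF ab] .
  have "\<sigma> (of_rat r) * of_int b = \<sigma> (of_rat r * of_int b)"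
    using mult[OF QL_of_rat QL_of_int] of_int by simp
  also have "of_rat r * (of_int b :: complex) = of_int a" using b r by (simp add: of_rat_divide)
  finally have "\<sigma> (of_rat r) * of_int b = of_int a" using of_int by simp
  hence "\<sigma> (of_rat r) = of_int a / of_int b" using b by (simp add: field_simps)
  thus ?thesis using r by (simp add: of_rat_divide)
qed

lemma power: "x \<in> QL \<xi> \<Longrightarrow> \<sigma> (x ^ n) = \<sigma> x ^ n"
  by (induction n) (auto simp: one mult QL_power)

lemma sum: "(\<And>i. i \<in> A \<Longrightarrow> f i \<in> QL \<xi>) \<Longrightarrow> \<sigma> (sum f A) = (\<Sum>i\<in>A. \<sigma> (f i))"
  by (induction A rule: infinite_finite_induct) (auto simp: zero add QL_sum)

lemma prod: "(\<And>i. i \<in> A \<Longrightarrow> f i \<in> QL \<xi>) \<Longrightarrow> \<sigma> (prod f A) = (\<Prod>i\<in>A. \<sigma> (f i))"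
  by (induction A rule: infinite_finite_induct) (auto simp: one mult QL_prod)

lemma poly: "x \<in> QL \<xi> \<Longrightarrow> \<sigma> (poly (of_rat_poly q) x) = poly (of_rat_poly q) (\<sigma> x)"
proof (induction q)
  case 0 thus ?case using zero by simp
next
  case (pCons a q)
  have "\<sigma> (poly (of_rat_poly (pCons a q)) x) = \<sigma> (of_rat a + x * poly (of_rat_poly q) x)" by
    (simp add: hom_distribs)
  also have "\<dots> = of_rat a + \<sigma> x * \<sigma> (poly (of_rat_poly q) x)"
    using pCons by (simp add: add mult QL_of_rat QL_mult QL_poly of_rat)
  finally show ?case using pCons by (simp add: hom_distribs)
qed

lemma poly_int: "x \<in> QL \<xi> \<Longrightarrow> \<sigma> (poly (of_int_poly q) x) = poly (of_int_poly q) (\<sigma> x)"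
  using poly[of x "of_int_poly q"] by (simp add: of_rat_poly_of_int_poly)

lemma inj: "inj \<sigma>"
proof (rule injI)
  fix x y assume eq: "\<sigma> x = \<sigma> y"
  show "x = y"
  proof (cases "x \<in> QL \<xi>"; cases "y \<in> QL \<xi>")
    assume "x \<in> QL \<xi>" "y \<in> QL \<xi>" thus ?thesis using eq inj_onD[OF bij_betw_imp_inj_on[OF bij]]
      by blast
  next
    assume "x \<in> QL \<xi>" "y \<notin> QL \<xi>" thus ?thesis using eq QL outside by metis
  next
    assume "x \<notin> QL \<xi>" "y \<in> QL \<xi>" thus ?thesis using eq QL outside by metis
  next
    assume "x \<notin> QL \<xi>" "y \<notin> QL \<xi>" thus ?thesis using eq outside by metis
  qed
qed

lemma surj: "surj \<sigma>"
proof -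
  have "y \<in> range \<sigma>" for y
  proof (cases "y \<in> QL \<xi>")
    case True thus ?thesis using bij unfolding bij_betw_def by auto
  next
    case False thus ?thesis using outside by (metis rangeI)
  qed
  thus ?thesis by blast
qed

lemma bij_UNIV: "bij \<sigma>" using inj surj by (simp add: bij_def)

lemma inv_apply: "inv \<sigma> (\<sigma> x) = x" using inj by simp

lemma apply_inv: "\<sigma> (inv \<sigma> x) = x" using surj by (simp add: surj_f_inv_f)

lemma QL_iff: "\<sigma> x \<in> QL \<xi> \<longleftrightarrow> x \<in> QL \<xi>"
  using QL outside by metis

lemma inv_QL: "x \<in> QL \<xi> \<Longrightarrow> inv \<sigma> x \<in> QL \<xi>"
  using QL_iff apply_inv by metis

lemma inv_aut: "inv \<sigma> \<in> Aut_L \<xi>"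
proof -
  have b: "bij_betw (inv \<sigma>) (QL \<xi>) (QL \<xi>)"
    unfolding bij_betw_def
  proof
    show "inj_on (inv \<sigma>) (QL \<xi>)"
      by (metis bij_UNIV bij_imp_bij_inv bij_is_inj inj_on_subset subset_UNIV)
    show "inv \<sigma> ` QL \<xi> = QL \<xi>"
    proof
      show "inv \<sigma> ` QL \<xi> \<subseteq> QL \<xi>" using inv_QL by blast
      show "QL \<xi> \<subseteq> inv \<sigma> ` QL \<xi>" using QL inv_apply by (metis image_eqI subsetI)
    qed
  qed
  have h: "inv \<sigma> (x + y) = inv \<sigma> x + inv \<sigma> y \<and> inv \<sigma> (x * y) = inv \<sigma> x * inv \<sigma> y"
    if "x \<in> QL \<xi>" "y \<in> QL \<xi>" for x y
  proof -
    have "\<sigma> (inv \<sigma> x + inv \<sigma> y) = x + y" "\<sigma> (inv \<sigma> x * inv \<sigma> y) = x * y"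
      using add mult inv_QL that apply_inv by auto
    thus ?thesis using inv_apply by metis
  qed
  have "inv \<sigma> 1 = 1" using one inv_apply by metis
  moreover have "x \<notin> QL \<xi> \<Longrightarrow> inv \<sigma> x = x" for x using outside inv_apply by metis
  ultimately show ?thesis unfolding Aut_L_def using b h by blast
qed

end

lemma Aut_L_comp: "\<sigma> \<in> Aut_L \<xi> \<Longrightarrow> \<tau> \<in> Aut_L \<xi> \<Longrightarrow> \<sigma> \<circ> \<tau> \<in> Aut_L \<xi>"
proof -
  assume s: "\<sigma> \<in> Aut_L \<xi>" and t: "\<tau> \<in> Aut_L \<xi>"
  interpret s: aut \<xi> \<sigma> by (rule aut.intro, fact)
  interpret t: aut \<xi> \<tau> by (rule aut.intro, fact)
  have "bij_betw (\<sigma> \<circ> \<tau>) (QL \<xi>) (QL \<xi>)" using bij_betw_trans[OF t.bij s.bij] .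
  moreover have "\<forall>x\<in>QL \<xi>. \<forall>y\<in>QL \<xi>. (\<sigma> \<circ> \<tau>) (x + y) = (\<sigma> \<circ> \<tau>) x + (\<sigma> \<circ> \<tau>) y \<and>
      (\<sigma> \<circ> \<tau>) (x * y) = (\<sigma> \<circ> \<tau>) x * (\<sigma> \<circ> \<tau>) y"
    by (simp add: s.add s.mult t.add t.mult t.QL)
  moreover have "(\<sigma> \<circ> \<tau>) 1 = 1" by (simp add: s.one t.one)
  moreover have "\<forall>x. x \<notin> QL \<xi> \<longrightarrow> (\<sigma> \<circ> \<tau>) x = x" by (simp add: s.outside t.outside)
  ultimately show ?thesis unfolding Aut_L_def by blast
qed

lemma Aut_L_id: "id \<in> Aut_L \<xi>"
  unfolding Aut_L_def by (auto simp: bij_betw_id)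

lemma Aut_L_eqI:
  assumes "\<sigma> \<in> Aut_L \<xi>" "\<tau> \<in> Aut_L \<xi>" "\<sigma> \<xi> = \<tau> \<xi>"
  shows "\<sigma> = \<tau>"
proof
  interpret s: aut \<xi> \<sigma> by (rule aut.intro, fact)
  interpret t: aut \<xi> \<tau> by (rule aut.intro, fact)
  fix x show "\<sigma> x = \<tau> x"
  proof (cases "x \<in> QL \<xi>")
    case True then obtain q where "x = poly (of_rat_poly q) \<xi>" by (rule QL_polyE)
    thus ?thesis using s.poly[OF QL_xi] t.poly[OF QL_xi] assms(3) by simp
  next
    case False thus ?thesis using s.outside t.outside by simp
  qed
qed

lemma Aut_L_inv: "\<sigma> \<in> Aut_L \<xi> \<Longrightarrow> inv \<sigma> \<in> Aut_L \<xi>"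
  by (rule aut.inv_aut[OF aut.intro])

lemma OL_aut: "\<sigma> \<in> Aut_L \<xi> \<Longrightarrow> x \<in> OL \<xi> \<Longrightarrow> \<sigma> x \<in> OL \<xi>"
proof -
  assume s: "\<sigma> \<in> Aut_L \<xi>" and x: "x \<in> OL \<xi>"
  interpret aut \<xi> \<sigma> by (rule aut.intro, fact)
  from x obtain q where q: "lead_coeff q = 1" "poly (of_int_poly q) x = 0" and xL: "x \<in> QL \<xi>"
    unfolding OL_iff alg_int_def by auto
  have "poly (of_int_poly q) (\<sigma> x) = \<sigma> (poly (of_int_poly q) x)" using poly_int[OF xL] by simp
  also have "\<dots> = 0" using q(2) zero by simp
  finally show ?thesis using q(1) QL[OF xL] unfolding OL_iff alg_int_def by blast
qed

section \<open>Ideals of O_L\<close>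

lemma ideal_OL_subset: "is_ideal_OL \<xi> I \<Longrightarrow> x \<in> I \<Longrightarrow> x \<in> OL \<xi>"
  unfolding is_ideal_OL_def by blast

lemma ideal_OL_0: "is_ideal_OL \<xi> I \<Longrightarrow> 0 \<in> I"
  unfolding is_ideal_OL_def by blast

lemma ideal_OL_add: "is_ideal_OL \<xi> I \<Longrightarrow> x \<in> I \<Longrightarrow> y \<in> I \<Longrightarrow> x + y \<in> I"
  unfolding is_ideal_OL_def by blast

lemma ideal_OL_minus: "is_ideal_OL \<xi> I \<Longrightarrow> x \<in> I \<Longrightarrow> - x \<in> I"
  unfolding is_ideal_OL_def by blast

lemma ideal_OL_mult_left: "is_ideal_OL \<xi> I \<Longrightarrow> r \<in> OL \<xi> \<Longrightarrow> x \<in> I \<Longrightarrow> r * x \<in> I"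
  unfolding is_ideal_OL_def by blast

lemma ideal_OL_mult_right: "is_ideal_OL \<xi> I \<Longrightarrow> r \<in> OL \<xi> \<Longrightarrow> x \<in> I \<Longrightarrow> x * r \<in> I"
  using ideal_OL_mult_left by (simp add: mult.commute)

lemma ideal_OL_diff: "is_ideal_OL \<xi> I \<Longrightarrow> x \<in> I \<Longrightarrow> y \<in> I \<Longrightarrow> x - y \<in> I"
  using ideal_OL_add[of \<xi> I x "- y"] ideal_OL_minus by simp

lemma ideal_OL_sum: "is_ideal_OL \<xi> I \<Longrightarrow> (\<And>i. i \<in> A \<Longrightarrow> f i \<in> I) \<Longrightarrow> sum f A \<in> I"
  by (induction A rule: infinite_finite_induct) (auto intro: ideal_OL_add ideal_OL_0)

lemma ideal_OL_poly_diff: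
  assumes I: "is_ideal_OL \<xi> I" and a: "a \<in> OL \<xi>" and b: "b \<in> OL \<xi>" and ab: "a - b \<in> I"
  shows "poly (of_int_poly u) a - poly (of_int_poly u) b \<in> I"
proof (induction u)
  case 0 thus ?case using ideal_OL_0[OF I] by simp
next
  case (pCons c u)
  have "poly (of_int_poly (pCons c u)) a - poly (of_int_poly (pCons c u)) b
      = (a - b) * poly (of_int_poly u) a + b * (poly (of_int_poly u) a - poly (of_int_poly u) b)"
    by (simp add: hom_distribs algebra_simps)
  also have "\<dots> \<in> I"
    by (intro ideal_OL_add[OF I] ideal_OL_mult_right[OF I] ideal_OL_mult_left[OF I] OL_poly_int
        a b ab pCons)
  finally show ?case .
qed

lemma prime_ideal_OL_ideal: "prime_ideal_OL \<xi> P \<Longrightarrow> is_ideal_OL \<xi> P"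
  unfolding prime_ideal_OL_def by blast

lemma prime_ideal_OL_prime:
  "prime_ideal_OL \<xi> P \<Longrightarrow> x \<in> OL \<xi> \<Longrightarrow> y \<in> OL \<xi> \<Longrightarrow> x * y \<in> P \<Longrightarrow> x \<in> P \<or> y \<in> P"
  unfolding prime_ideal_OL_def by blast

lemma prime_ideal_OL_1: "prime_ideal_OL \<xi> P \<Longrightarrow> 1 \<notin> P"
proof
  assume P: "prime_ideal_OL \<xi> P" and "1 \<in> P"
  hence "OL \<xi> \<subseteq> P" using ideal_OL_mult_right[OF prime_ideal_OL_ideal[OF P], of _ 1] by auto
  thus False using P ideal_OL_subset[OF prime_ideal_OL_ideal[OF P]] unfolding prime_ideal_OL_def
    by blast
qed

lemma prime_ideal_OL_prod:
  assumes P: "prime_ideal_OL \<xi> P" and "finite A" and "\<And>a. a \<in> A \<Longrightarrow> f a \<in> OL \<xi>"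
    and "prod f A \<in> P"
  shows "\<exists>a\<in>A. f a \<in> P"
  using assms(2-)
proof (induction A rule: finite_induct)
  case empty thus ?case using prime_ideal_OL_1[OF P] by simp
next
  case (insert a A)
  hence "f a \<in> P \<or> prod f A \<in> P"
    by (intro prime_ideal_OL_prime[OF P]) (auto intro: OL_prod)
  thus ?case using insert by blast
qed

lemma prime_ideal_OL_of_int:
  assumes P: "prime_ideal_OL \<xi> P" and p: "prime p" and pP: "of_nat p \<in> P"
    and kP: "of_int k \<in> P"
  shows "int p dvd k"
proof (rule ccontr)
  assume "\<not> int p dvd k"
  hence "coprime (int p) k" using p prime_imp_coprime[of "int p" k] by simp
  then obtain u v where uv: "u * int p + v * k = 1"
    using bezout_int[of "int p" k] by (auto simp: coprime_iff_gcd_eq_1)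
  have I: "is_ideal_OL \<xi> P" using prime_ideal_OL_ideal[OF P] .
  have "of_int u * of_nat p + of_int v * of_int k \<in> P"
    by (intro ideal_OL_add[OF I] ideal_OL_mult_left[OF I] OL_of_int pP kP)
  also have "of_int u * of_nat p + of_int v * of_int k = (of_int (u * int p + v * k) :: complex)"
    by simp
  finally show False using uv prime_ideal_OL_1[OF P] by simp
qed

definition pOL :: "complex \<Rightarrow> nat \<Rightarrow> complex set" where
  "pOL \<xi> p = {of_nat p * r | r. r \<in> OL \<xi>}"

lemma pOL_I: "r \<in> OL \<xi> \<Longrightarrow> of_nat p * r \<in> pOL \<xi> p"
  unfolding pOL_def by blast

lemma pOL_E: "z \<in> pOL \<xi> p \<Longrightarrow> (\<And>r. r \<in> OL \<xi> \<Longrightarrow> z = of_nat p * r \<Longrightarrow> Q) \<Longrightarrow> Q"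
  unfolding pOL_def by blast

lemma ideal_pOL: "is_ideal_OL \<xi> (pOL \<xi> p)"
  unfolding is_ideal_OL_def
proof (intro conjI ballI subsetI)
  show "x \<in> OL \<xi>" if "x \<in> pOL \<xi> p" for x
    using that by (auto elim!: pOL_E intro: OL_mult OL_of_nat)
  show "0 \<in> pOL \<xi> p" by (metis OL_0 mult_zero_right pOL_I)
  show "x + y \<in> pOL \<xi> p" if "x \<in> pOL \<xi> p" "y \<in> pOL \<xi> p" for x y
    using that by (auto elim!: pOL_E) (metis OL_add distrib_left pOL_I)
  show "- x \<in> pOL \<xi> p" if "x \<in> pOL \<xi> p" for x
    using that by (auto elim!: pOL_E) (metis OL_minus minus_mult_right pOL_I)
  show "r * x \<in> pOL \<xi> p" if "r \<in> OL \<xi>" "x \<in> pOL \<xi> p" for r x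
    using that by (auto elim!: pOL_E) (metis OL_mult mult.left_commute pOL_I)
qed

lemma of_nat_in_pOL: "of_nat p \<in> pOL \<xi> p"
  by (metis OL_1 mult_1_right pOL_I)

lemma one_notin_pOL:
  assumes p: "prime p"
  shows "1 \<notin> pOL \<xi> p"
proof
  assume "1 \<in> pOL \<xi> p"
  then obtain r where r: "r \<in> OL \<xi>" "1 = of_nat p * r" by (elim pOL_E)
  have "r = of_rat (1 / of_nat p)" using r(2) p by (simp add: field_simps of_rat_divide)
  hence "1 / of_nat p \<in> (\<int> :: rat set)" using r(1) alg_int_of_rat_Ints by (simp add: OL_iff)
  then obtain k where "1 / of_nat p = (of_int k :: rat)" by (elim Ints_cases)
  hence "k * int p = 1" using p by
    (simp add: field_simps) (metis of_int_eq_1_iff of_int_mult of_int_of_nat_eq)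
  hence "int p dvd 1" by (metis dvd_triv_right)
  thus False using p by simp
qed

lemma ideal_OL_Union_chain:
  assumes C: "C \<in> chains {I. is_ideal_OL \<xi> I}" and "C \<noteq> {}"
  shows "is_ideal_OL \<xi> (\<Union>C)"
proof -
  have ideal: "is_ideal_OL \<xi> X" if "X \<in> C" for X using C that chainsD2 by blast
  have both: "\<exists>Z\<in>C. x \<in> Z \<and> y \<in> Z" if "x \<in> \<Union>C" "y \<in> \<Union>C" for x y
    using that chainsD[OF C] by blast
  show ?thesis
    unfolding is_ideal_OL_def
  proof (intro conjI ballI subsetI)
    show "x \<in> OL \<xi>" if "x \<in> \<Union>C" for x using that ideal ideal_OL_subset by blast
    show "0 \<in> \<Union>C" using \<open>C \<noteq> {}\<close> ideal ideal_OL_0 by blast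
    show "x + y \<in> \<Union>C" if "x \<in> \<Union>C" "y \<in> \<Union>C" for x y
      using both[OF that] ideal ideal_OL_add by blast
    show "- x \<in> \<Union>C" if "x \<in> \<Union>C" for x using that ideal ideal_OL_minus by blast
    show "r * x \<in> \<Union>C" if "r \<in> OL \<xi>" "x \<in> \<Union>C" for r x
      using that ideal ideal_OL_mult_left by blast
  qed
qed

lemma ideal_OL_extend:
  assumes M: "is_ideal_OL \<xi> M" and x: "x \<in> OL \<xi>"
  shows "is_ideal_OL \<xi> {m + r * x | m r. m \<in> M \<and> r \<in> OL \<xi>}"
  unfolding is_ideal_OL_def
proof (intro conjI ballI subsetI; (elim CollectE exE conjE)?)
  show "z \<in> OL \<xi>" if "z = m + r * x" "m \<in> M" "r \<in> OL \<xi>" for z m r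
    using that x ideal_OL_subset[OF M] by (auto intro!: OL_add OL_mult)
  show "0 \<in> {m + r * x | m r. m \<in> M \<and> r \<in> OL \<xi>}"
    using ideal_OL_0[OF M] OL_0 by force
  show "a + b \<in> {m + r * x | m r. m \<in> M \<and> r \<in> OL \<xi>}"
    if "a = m1 + r1 * x" "m1 \<in> M" "r1 \<in> OL \<xi>" "b = m2 + r2 * x" "m2 \<in> M" "r2 \<in> OL \<xi>"
    for a b m1 r1 m2 r2
    using that ideal_OL_add[OF M] OL_add
    by (intro CollectI exI[of _ "m1 + m2"] exI[of _ "r1 + r2"]) (auto simp: algebra_simps)
  show "- a \<in> {m + r * x | m r. m \<in> M \<and> r \<in> OL \<xi>}"
    if "a = m1 + r1 * x" "m1 \<in> M" "r1 \<in> OL \<xi>" for a m1 r1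
    using that ideal_OL_minus[OF M] OL_minus
      by (intro CollectI exI[of _ "- m1"] exI[of _ "- r1"]) auto
  show "s * a \<in> {m + r * x | m r. m \<in> M \<and> r \<in> OL \<xi>}"
    if "s \<in> OL \<xi>" "a = m1 + r1 * x" "m1 \<in> M" "r1 \<in> OL \<xi>" for s a m1 r1
    using that
    by (intro CollectI exI[of _ "s * m1"] exI[of _ "s * r1"])
      (simp add: distrib_left mult.assoc ideal_OL_mult_left[OF M] OL_mult)
qed

lemma maximal_ideal_OL_prime:
  assumes M: "is_ideal_OL \<xi> M" "1 \<notin> M"
    and max: "\<And>I. is_ideal_OL \<xi> I \<Longrightarrow> M \<subseteq> I \<Longrightarrow> 1 \<notin> I \<Longrightarrow> I = M"
    and x: "x \<in> OL \<xi>" "x \<notin> M" and y: "y \<in> OL \<xi>" and xy: "x * y \<in> M"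
  shows "y \<in> M"
proof -
  define M' where "M' = {m + r * x | m r. m \<in> M \<and> r \<in> OL \<xi>}"
  have "M \<subseteq> M'" unfolding M'_def using OL_0 by force
  moreover have "x \<in> M'" unfolding M'_def using ideal_OL_0[OF M(1)] OL_1 by force
  ultimately have "1 \<in> M'"
    using max[OF ideal_OL_extend[OF M(1) x(1)]] x(2) unfolding M'_def by blast
  then obtain m r where mr: "1 = m + r * x" "m \<in> M" "r \<in> OL \<xi>" unfolding M'_def by blast
  have "y = m * y + r * (x * y)" using mr(1) by (metis mult_1 distrib_right mult.assoc)
  also have "\<dots> \<in> M"
    by (intro ideal_OL_add[OF M(1)] ideal_OL_mult_right[OF M(1)] ideal_OL_mult_left[OF M(1)]
        y mr(2,3) xy)
  finally show ?thesis .
qed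

lemma prime_ideal_OL_above:
  assumes p: "prime p"
  obtains P where "prime_ideal_OL \<xi> P" "of_nat p \<in> P"
proof -
  define A where "A = {I. is_ideal_OL \<xi> I \<and> of_nat p \<in> I \<and> 1 \<notin> I}"
  have pA: "pOL \<xi> p \<in> A" unfolding A_def using ideal_pOL of_nat_in_pOL one_notin_pOL[OF p] by blast
  have "\<exists>U\<in>A. \<forall>X\<in>C. X \<subseteq> U" if C: "C \<in> chains A" for C
  proof (cases "C = {}")
    case True thus ?thesis using pA by blast
  next
    case False
    have "C \<in> chains {I. is_ideal_OL \<xi> I}" using C unfolding A_def chains_def chain_subset_def
      by blast
    hence "\<Union>C \<in> A" using ideal_OL_Union_chain False chainsD2[OF C] unfolding A_def by blast
    thus ?thesis by blast
  qed
  then obtain M where M: "M \<in> A" and max: "\<forall>X\<in>A. M \<subseteq> X \<longrightarrow> X = M"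
    using Zorn_Lemma2[of A] by blast
  have IM: "is_ideal_OL \<xi> M" and pM: "of_nat p \<in> M" and oneM: "1 \<notin> M"
    using M unfolding A_def by auto
  have "prime_ideal_OL \<xi> M"
    unfolding prime_ideal_OL_def
  proof (intro conjI ballI impI)
    show "M \<noteq> OL \<xi>" using oneM OL_1 by blast
    show "M \<noteq> {0}" using pM p by auto
    show "x \<in> M \<or> y \<in> M" if "x \<in> OL \<xi>" "y \<in> OL \<xi>" "x * y \<in> M" for x y
      using maximal_ideal_OL_prime[OF IM oneM _ that(1) _ that(2,3)] max pM unfolding A_def by blast
  qed (rule IM)
  thus thesis using that pM by blast
qed

lemma prime_ideal_OL_vimage:
  assumes s: "\<sigma> \<in> Aut_L \<xi>" and P: "prime_ideal_OL \<xi> P"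
  shows "prime_ideal_OL \<xi> (OL \<xi> \<inter> \<sigma> -` P)"
proof -
  interpret aut \<xi> \<sigma> by (rule aut.intro, fact)
  have I: "is_ideal_OL \<xi> P" using prime_ideal_OL_ideal[OF P] .
  have L: "x \<in> OL \<xi> \<Longrightarrow> x \<in> QL \<xi>" for x by (simp add: OL_iff)
  have "is_ideal_OL \<xi> (OL \<xi> \<inter> \<sigma> -` P)"
    unfolding is_ideal_OL_def
    by (auto simp: zero add minus mult L OL_0 ideal_OL_0[OF I]
        intro: OL_add OL_minus OL_mult ideal_OL_add[OF I] ideal_OL_minus[OF I]
          ideal_OL_mult_left[OF I] OL_aut[OF s])
  moreover have "OL \<xi> \<inter> \<sigma> -` P \<noteq> OL \<xi>"
  proof -
    have "1 \<notin> OL \<xi> \<inter> \<sigma> -` P" using one prime_ideal_OL_1[OF P] by simp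
    thus ?thesis using OL_1 by blast
  qed
  moreover have "OL \<xi> \<inter> \<sigma> -` P \<noteq> {0}"
  proof -
    obtain a where a: "a \<in> P" "a \<noteq> 0" using P ideal_OL_0[OF I] unfolding prime_ideal_OL_def by blast
    have "inv \<sigma> a \<in> OL \<xi>" using OL_aut[OF inv_aut] ideal_OL_subset[OF I a(1)] .
    moreover have "inv \<sigma> a \<noteq> 0" using a(2) apply_inv zero by metis
    ultimately show ?thesis using a(1) apply_inv by auto
  qed
  moreover have "\<sigma> x \<in> P \<or> \<sigma> y \<in> P"
    if "x \<in> OL \<xi>" "y \<in> OL \<xi>" "\<sigma> (x * y) \<in> P" for x y
    using that prime_ideal_OL_prime[OF P] OL_aut[OF s] by (simp add: mult L)
  ultimately show ?thesis unfolding prime_ideal_OL_def by auto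
qed

section \<open>Congruences modulo an ideal above p\<close>

context
  fixes \<xi> :: complex and I :: "complex set" and p :: nat
  assumes I: "is_ideal_OL \<xi> I" and p: "prime p" and pI: "of_nat p \<in> I"

begin

lemma of_nat_mult_in_ideal_OL: "r \<in> OL \<xi> \<Longrightarrow> of_nat p * r \<in> I"
  using ideal_OL_mult_right[OF I _ pI] .

lemma add_power_prime_diff_in_ideal_OL:
  assumes x: "x \<in> OL \<xi>" and y: "y \<in> OL \<xi>"
  shows "(x + y) ^ p - x ^ p - y ^ p \<in> I"
proof -
  define f where "f k = of_nat (p choose k) * x ^ k * y ^ (p - k)" for k
  have p0: "p \<noteq> 0" using p by auto
  have "(x + y) ^ p = sum f {..p}" unfolding f_def by (rule binomial_ring)
  also have "\<dots> = f 0 + (f p + sum f ({..p} - {0} - {p}))"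
    using p0 by (simp add: sum.remove[of "{..p}" 0] sum.remove[of "{..p} - {0}" p])
  finally have "(x + y) ^ p - x ^ p - y ^ p = sum f ({..p} - {0} - {p})"
    unfolding f_def by simp
  also have "\<dots> \<in> I"
  proof (rule ideal_OL_sum[OF I])
    fix k assume "k \<in> {..p} - {0} - {p}"
    hence "p dvd (p choose k)" using p by (intro dvd_choose_prime) auto
    then obtain e where e: "p choose k = p * e" by blast
    have "f k = of_nat p * (of_nat e * x ^ k * y ^ (p - k))" unfolding f_def e by simp
    also have "\<dots> \<in> I" by (intro of_nat_mult_in_ideal_OL OL_mult OL_of_nat OL_power x y)
    finally show "f k \<in> I" .
  qed
  finally show ?thesis .
qed

lemma of_nat_power_prime_diff_in_ideal_OL: "(of_nat n :: complex) ^ p - of_nat n \<in> I"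
proof (induction n)
  case 0 thus ?case using p ideal_OL_0[OF I] by (simp add: zero_power prime_gt_0_nat)
next
  case (Suc n)
  have "(of_nat (Suc n) :: complex) ^ p - of_nat (Suc n)
      = ((of_nat n + 1) ^ p - of_nat n ^ p - 1 ^ p) + (of_nat n ^ p - of_nat n)"
    by (simp add: algebra_simps)
  also have "\<dots> \<in> I"
    by (intro ideal_OL_add[OF I] add_power_prime_diff_in_ideal_OL OL_of_nat OL_1 Suc)
  finally show ?case .
qed

lemma of_int_power_prime_diff_in_ideal_OL: "(of_int c :: complex) ^ p - of_int c \<in> I"
proof (cases "c \<ge> 0")
  case True thus ?thesis using of_nat_power_prime_diff_in_ideal_OL[of "nat c"] by simp
next
  case False
  define n where "n = nat (- c)"
  have c: "(of_int c :: complex) = - of_nat n" unfolding n_def using False by simp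
  show ?thesis
  proof (cases "p = 2")
    case True
    have "(of_int c :: complex) ^ p - of_int c = (of_nat n ^ p - of_nat n) + of_nat p * of_nat n"
      unfolding c True by (simp add: power2_eq_square)
    also have "\<dots> \<in> I"
      by (intro ideal_OL_add[OF I] of_nat_power_prime_diff_in_ideal_OL of_nat_mult_in_ideal_OL
          OL_of_nat)
    finally show ?thesis .
  next
    case False
    hence "odd p" using p prime_odd_nat prime_ge_2_nat[OF p] by force
    hence "(of_int c :: complex) ^ p - of_int c = - (of_nat n ^ p - of_nat n)"
      unfolding c by simp
    also have "\<dots> \<in> I" by (intro ideal_OL_minus[OF I] of_nat_power_prime_diff_in_ideal_OL)
    finally show ?thesis .
  qed
qed

lemma poly_power_prime_diff_in_ideal_OL:
  assumes x: "x \<in> OL \<xi>"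
  shows "poly (of_int_poly u) x ^ p - poly (of_int_poly u) (x ^ p) \<in> I"
proof (induction u)
  case 0 thus ?case using p ideal_OL_0[OF I] by (simp add: zero_power prime_gt_0_nat)
next
  case (pCons c u)
  define U where "U = poly (of_int_poly u) x"
  define Up where "Up = poly (of_int_poly u) (x ^ p)"
  have U: "U \<in> OL \<xi>" unfolding U_def by (intro OL_poly_int x)
  have "poly (of_int_poly (pCons c u)) x ^ p - poly (of_int_poly (pCons c u)) (x ^ p)
      = ((of_int c + x * U) ^ p - of_int c ^ p - (x * U) ^ p) + (of_int c ^ p - of_int c)
        + x ^ p * (U ^ p - Up)"
    unfolding U_def Up_def by (simp add: hom_distribs algebra_simps power_mult_distrib)
  also have "\<dots> \<in> I"
    using pCons[folded U_def Up_def]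
    by (intro ideal_OL_add[OF I] add_power_prime_diff_in_ideal_OL OL_of_int OL_mult x U
        of_int_power_prime_diff_in_ideal_OL ideal_OL_mult_left[OF I] OL_power)
  finally show ?case .
qed

end

section \<open>The Galois setting\<close>

locale gal =
  fixes F :: "int poly" and \<xi> :: complex
  assumes monic: "lead_coeff F = 1"
    and root: "poly (of_int_poly F) \<xi> = 0"
    and galois: "card (Aut_L \<xi>) = degree F"

begin

abbreviation "G \<equiv> Aut_L \<xi>"

abbreviation "d \<equiv> degree F"

abbreviation "Fq \<equiv> (of_int_poly F :: complex poly)"

lemma d_pos: "d > 0" using monic_root_degree_pos[OF monic root] .

lemma finite_G: "finite G" using galois d_pos card_ge_0_finite by metis

lemma root_conjugate: "\<sigma> \<in> G \<Longrightarrow> poly Fq (\<sigma> \<xi>) = 0"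
proof -
  assume s: "\<sigma> \<in> G"
  interpret aut \<xi> \<sigma> by (rule aut.intro, fact)
  have "poly Fq (\<sigma> \<xi>) = \<sigma> (poly Fq \<xi>)" using poly_int[OF QL_xi] by simp
  thus ?thesis using root zero by simp
qed

lemma inj_on_apply_xi: "inj_on (\<lambda>\<sigma>. \<sigma> \<xi>) G"
  by (rule inj_onI) (use Aut_L_eqI in blast)

lemma card_conjugates: "card ((\<lambda>\<sigma>. \<sigma> \<xi>) ` G) = d"
  using card_image[OF inj_on_apply_xi] galois by simp

lemma vanishing_poly_eq_0:
  fixes h :: "complex poly"
  assumes "degree h < d" "\<forall>\<sigma>\<in>G. poly h (\<sigma> \<xi>) = 0"
  shows "h = 0"
proof (rule ccontr)
  assume h: "h \<noteq> 0"
  have "(\<lambda>\<sigma>. \<sigma> \<xi>) ` G \<subseteq> {x. poly h x = 0}" using assms(2) by auto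
  hence "d \<le> card {x. poly h x = 0}"
    using card_mono[OF poly_roots_finite[OF h]] card_conjugates by metis
  also have "\<dots> \<le> degree h" using card_poly_roots_bound[OF h] .
  finally show False using assms(1) by simp
qed

lemma F_eq_prod_conjugates: "Fq = (\<Prod>\<sigma>\<in>G. [:- \<sigma> \<xi>, 1:])"
proof -
  define P where "P = (\<Prod>\<sigma>\<in>G. [:- \<sigma> \<xi>, 1:])"
  have dP: "degree P = d"
    unfolding P_def using galois by (subst degree_prod_eq_sum_degree) auto
  have lP: "lead_coeff P = 1" unfolding P_def by (simp add: lead_coeff_prod)
  have dF: "degree Fq = d" by (simp add: degree_map_poly)
  have lF: "lead_coeff Fq = 1" using monic by (simp add: degree_map_poly)
  define h where "h = Fq - P"
  have "degree h < d"
  proof (cases "h = 0")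
    case True thus ?thesis using d_pos by simp
  next
    case False
    have le: "degree h \<le> d" unfolding h_def using degree_diff_le[of Fq d P] dP dF by simp
    have "coeff h d = 0" unfolding h_def using lP lF dP dF by simp
    hence "degree h \<noteq> d" using False leading_coeff_0_iff by metis
    thus ?thesis using le by simp
  qed
  moreover have "\<forall>\<sigma>\<in>G. poly h (\<sigma> \<xi>) = 0"
  proof
    fix \<sigma> assume s: "\<sigma> \<in> G"
    have "poly P (\<sigma> \<xi>) = 0" unfolding P_def poly_prod
      using s finite_G by (intro prod_zero) auto
    thus "poly h (\<sigma> \<xi>) = 0" unfolding h_def using root_conjugate[OF s] by simp
  qed
  ultimately have "h = 0" by (rule vanishing_poly_eq_0)
  thus ?thesis unfolding h_def P_def by simp
qed

lemma QL_poly_degree_less: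
  assumes "y \<in> QL \<xi>"
  obtains q where "y = poly (of_rat_poly q) \<xi>" "degree q < d"
proof -
  from assms obtain q0 where y: "y = poly (of_rat_poly q0) \<xi>" by (rule QL_polyE)
  define Fr where "Fr = (of_int_poly F :: rat poly)"
  have Fr0: "Fr \<noteq> 0" and dFr: "degree Fr = d" unfolding Fr_def using monic by
    (auto simp: degree_map_poly)
  define q where "q = q0 mod Fr"
  have "q0 = q0 div Fr * Fr + q" unfolding q_def by simp
  hence "of_rat_poly q0 = of_rat_poly (q0 div Fr) * of_rat_poly Fr + of_rat_poly q"
    by (metis hom_distribs of_rat_poly_mult)
  moreover have "poly (of_rat_poly Fr) \<xi> = 0" unfolding Fr_def of_rat_poly_of_int_poly using root .
  ultimately have "y = poly (of_rat_poly q) \<xi>" using y by simp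
  moreover have "degree q < d"
    using degree_mod_less[OF Fr0, of q0] d_pos dFr unfolding q_def by fastforce
  ultimately show ?thesis using that by blast
qed

lemma QL_fixed_imp_rat:
  assumes y: "y \<in> QL \<xi>" and fx: "\<forall>\<tau>\<in>G. \<tau> y = y"
  shows "\<exists>r. y = of_rat r"
proof -
  obtain q where q: "y = poly (of_rat_poly q) \<xi>" "degree q < d" using QL_poly_degree_less[OF y]
    by blast
  define h where "h = of_rat_poly q - [:y:]"
  have "degree q \<le> d - 1" using q(2) by simp
  hence "degree h \<le> d - 1"
    unfolding h_def using degree_diff_le[of "of_rat_poly q" "d - 1" "[:y:]"] by
      (simp add: degree_map_poly)
  hence "degree h < d" using d_pos by linarith
  moreover have "\<forall>\<sigma>\<in>G. poly h (\<sigma> \<xi>) = 0"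
  proof
    fix \<sigma> assume s: "\<sigma> \<in> G"
    interpret aut \<xi> \<sigma> by (rule aut.intro, fact)
    have "poly (of_rat_poly q) (\<sigma> \<xi>) = \<sigma> y" using q(1) poly[OF QL_xi] by simp
    thus "poly h (\<sigma> \<xi>) = 0" unfolding h_def using fx s by simp
  qed
  ultimately have "h = 0" by (rule vanishing_poly_eq_0)
  hence "of_rat_poly q = [:y:]" unfolding h_def by simp
  hence "coeff (of_rat_poly q) 0 = y" by simp
  thus ?thesis by (metis coeff_map_poly of_rat_0)
qed

lemma bij_betw_comp_left: "\<tau> \<in> G \<Longrightarrow> bij_betw ((\<circ>) \<tau>) G G"
proof -
  assume t: "\<tau> \<in> G"
  interpret t: aut \<xi> \<tau> by (rule aut.intro, fact)
  show ?thesis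
  proof (rule bij_betw_byWitness[where f' = "(\<circ>) (inv \<tau>)"])
    show "\<forall>a\<in>G. inv \<tau> \<circ> (\<tau> \<circ> a) = a" by (auto simp: t.inv_apply)
    show "\<forall>a'\<in>G. \<tau> \<circ> (inv \<tau> \<circ> a') = a'" by (auto simp: t.apply_inv)
    show "(\<circ>) \<tau> ` G \<subseteq> G" using Aut_L_comp t by blast
    show "(\<circ>) (inv \<tau>) ` G \<subseteq> G" using Aut_L_comp t.inv_aut by blast
  qed
qed

definition tr_L :: "complex \<Rightarrow> complex" where "tr_L y = (\<Sum>\<sigma>\<in>G. \<sigma> y)"

definition nm_L :: "complex \<Rightarrow> complex" where "nm_L y = (\<Prod>\<sigma>\<in>G. \<sigma> y)"

lemma tr_L_QL: "y \<in> QL \<xi> \<Longrightarrow> tr_L y \<in> QL \<xi>"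
  unfolding tr_L_def by (intro QL_sum) (use aut.QL aut.intro in blast)

lemma nm_L_QL: "y \<in> QL \<xi> \<Longrightarrow> nm_L y \<in> QL \<xi>"
  unfolding nm_L_def by (intro QL_prod) (use aut.QL aut.intro in blast)

lemma tr_L_fixed: "y \<in> QL \<xi> \<Longrightarrow> \<tau> \<in> G \<Longrightarrow> \<tau> (tr_L y) = tr_L y"
proof -
  assume y: "y \<in> QL \<xi>" and t: "\<tau> \<in> G"
  interpret t: aut \<xi> \<tau> by (rule aut.intro, fact)
  have "\<tau> (tr_L y) = (\<Sum>\<sigma>\<in>G. \<tau> (\<sigma> y))" unfolding tr_L_def
    by (rule t.sum) (use aut.QL aut.intro y in blast)
  also have "\<dots> = (\<Sum>\<sigma>\<in>G. (\<lambda>\<rho>. \<rho> y) (\<tau> \<circ> \<sigma>))" by simp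
  also have "\<dots> = tr_L y" unfolding tr_L_def
    by (rule sum.reindex_bij_betw[OF bij_betw_comp_left[OF t]])
  finally show ?thesis .
qed

lemma nm_L_fixed: "y \<in> QL \<xi> \<Longrightarrow> \<tau> \<in> G \<Longrightarrow> \<tau> (nm_L y) = nm_L y"
proof -
  assume y: "y \<in> QL \<xi>" and t: "\<tau> \<in> G"
  interpret t: aut \<xi> \<tau> by (rule aut.intro, fact)
  have "\<tau> (nm_L y) = (\<Prod>\<sigma>\<in>G. \<tau> (\<sigma> y))" unfolding nm_L_def
    by (rule t.prod) (use aut.QL aut.intro y in blast)
  also have "\<dots> = (\<Prod>\<sigma>\<in>G. (\<lambda>\<rho>. \<rho> y) (\<tau> \<circ> \<sigma>))" by simp
  also have "\<dots> = nm_L y" unfolding nm_L_def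
    by (rule prod.reindex_bij_betw[OF bij_betw_comp_left[OF t]])
  finally show ?thesis .
qed

lemma tr_L_rat: "y \<in> QL \<xi> \<Longrightarrow> \<exists>r. tr_L y = of_rat r"
  using QL_fixed_imp_rat tr_L_QL tr_L_fixed by blast

text \<open>The norm of y is a nonzero rational, and y times the product of its other conjugates.\<close>
lemma QL_inverse:
  assumes y: "y \<in> QL \<xi>" "y \<noteq> 0"
  shows "inverse y \<in> QL \<xi>"
proof -
  obtain r where r: "nm_L y = of_rat r"
    using QL_fixed_imp_rat[OF nm_L_QL[OF y(1)]] nm_L_fixed[OF y(1)] by blast
  have nz: "\<sigma> y \<noteq> 0" if "\<sigma> \<in> G" for \<sigma>
  proof
    interpret aut \<xi> \<sigma> by (rule aut.intro, fact)
    assume "\<sigma> y = 0"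
    thus False using zero inj y(2) by (metis injD)
  qed
  define Q where "Q = (\<Prod>\<sigma>\<in>G - {id}. \<sigma> y)"
  have yQ: "nm_L y = y * Q"
    unfolding nm_L_def Q_def using prod.remove[OF finite_G Aut_L_id, of "\<lambda>\<sigma>. \<sigma> y"] by simp
  have "nm_L y \<noteq> 0" unfolding nm_L_def using nz finite_G by (simp add: prod_zero_iff)
  hence r0: "r \<noteq> 0" using r by simp
  have "y * (Q * of_rat (inverse r)) = of_rat (r * inverse r)"
    using yQ r by (simp add: of_rat_mult mult.assoc)
  hence "inverse y = Q * of_rat (inverse r)" using r0 by (intro inverse_unique) simp
  also have "\<dots> \<in> QL \<xi>" unfolding Q_def
    by (intro QL_mult QL_prod QL_of_rat) (use aut.QL aut.intro y in blast)
  finally show ?thesis .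
qed

lemma OL_xi: "\<xi> \<in> OL \<xi>"
  using QL_xi monic root unfolding OL_iff alg_int_def by blast

lemma tr_L_OL_int: "y \<in> OL \<xi> \<Longrightarrow> \<exists>k. tr_L y = of_int k"
proof -
  assume y: "y \<in> OL \<xi>"
  obtain r where r: "tr_L y = of_rat r" using tr_L_rat y OL_iff by blast
  have "alg_int (tr_L y)" unfolding tr_L_def
    by (rule alg_int_sum) (use OL_aut y OL_iff in blast)
  hence "r \<in> \<int>" using alg_int_of_rat_Ints r by simp
  then obtain k where "r = of_int k" by (elim Ints_cases)
  thus ?thesis using r by simp
qed

subsection \<open>The trace form and the index of \<int>[\<xi>] in O_L\<close>

definition basis_comb :: "(nat \<Rightarrow> rat) \<Rightarrow> complex" where
  "basis_comb c = (\<Sum>i<d. of_rat (c i) * \<xi> ^ i)"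

lemma basis_comb_QL: "basis_comb c \<in> QL \<xi>"
  unfolding basis_comb_def by (intro QL_sum QL_mult QL_of_rat QL_power QL_xi)

lemma QL_basis_comb: "x \<in> QL \<xi> \<Longrightarrow> \<exists>c. x = basis_comb c"
proof -
  assume "x \<in> QL \<xi>"
  then obtain q where q: "x = poly (of_rat_poly q) \<xi>" "degree q < d" by (rule QL_poly_degree_less)
  have "x = (\<Sum>i<d. coeff (of_rat_poly q) i * \<xi> ^ i)"
    using q poly_sum_coeff_less[of "of_rat_poly q" d] by (simp add: degree_map_poly)
  thus ?thesis unfolding basis_comb_def by (intro exI[of _ "coeff q"]) (simp add: coeff_map_poly)
qed

lemma aut_basis_comb: "\<sigma> \<in> G \<Longrightarrow> \<sigma> (basis_comb c) = (\<Sum>i<d. of_rat (c i) * \<sigma> \<xi> ^ i)"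
proof -
  assume s: "\<sigma> \<in> G"
  interpret aut \<xi> \<sigma> by (rule aut.intro, fact)
  show ?thesis unfolding basis_comb_def
    by (subst sum)
      (auto intro!: sum.cong QL_mult QL_of_rat QL_power QL_xi
      simp: mult of_rat power QL_xi QL_of_rat QL_power)
qed

lemma basis_comb_eq_0: "basis_comb c = 0 \<Longrightarrow> i < d \<Longrightarrow> c i = 0"
proof -
  assume z: "basis_comb c = 0" and i: "i < d"
  define q where "q = (\<Sum>k<d. monom (c k) k)"
  have dq: "degree (of_rat_poly q) < d"
    unfolding q_def using d_pos
    by (simp add: degree_map_poly)
      (intro degree_sum_less; auto intro: le_less_trans[OF degree_monom_le])
  have cq: "coeff q k = c k" if "k < d" for k
    unfolding q_def coeff_sum using that by (simp add: coeff_monom)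
  have "\<forall>\<sigma>\<in>G. poly (of_rat_poly q) (\<sigma> \<xi>) = 0"
  proof
    fix \<sigma> assume s: "\<sigma> \<in> G"
    interpret aut \<xi> \<sigma> by (rule aut.intro, fact)
    have "poly (of_rat_poly q) (\<sigma> \<xi>) = (\<Sum>k<d. coeff (of_rat_poly q) k * \<sigma> \<xi> ^ k)"
      by (rule poly_sum_coeff_less[OF dq])
    also have "\<dots> = (\<Sum>k<d. of_rat (c k) * \<sigma> \<xi> ^ k)"
      by (intro sum.cong) (auto simp: coeff_map_poly cq)
    also have "\<dots> = \<sigma> (basis_comb c)" using aut_basis_comb[OF s] by simp
    finally show "poly (of_rat_poly q) (\<sigma> \<xi>) = 0" using z zero by simp
  qed
  hence "of_rat_poly q = 0" using vanishing_poly_eq_0 dq by blast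
  hence "q = 0" by simp
  hence "coeff q i = 0" by simp
  moreover have "coeff q i = c i" unfolding q_def coeff_sum using i by (simp add: coeff_monom)
  ultimately show ?thesis by simp
qed

lemma tr_L_rat_comb:
  assumes "\<And>i. i \<in> A \<Longrightarrow> z i \<in> QL \<xi>" "finite A"
  shows "tr_L (\<Sum>i\<in>A. of_rat (c i) * z i) = (\<Sum>i\<in>A. of_rat (c i) * tr_L (z i))"
proof -
  have "tr_L (\<Sum>i\<in>A. of_rat (c i) * z i) = (\<Sum>\<sigma>\<in>G. \<Sum>i\<in>A. of_rat (c i) * \<sigma> (z i))"
    unfolding tr_L_def
  proof (rule sum.cong)
    fix \<sigma> assume s: "\<sigma> \<in> G"
    interpret aut \<xi> \<sigma> by (rule aut.intro, fact)
    show "\<sigma> (\<Sum>i\<in>A. of_rat (c i) * z i) = (\<Sum>i\<in>A. of_rat (c i) * \<sigma> (z i))"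
      using assms by (subst sum)
        (auto intro!: sum.cong QL_mult QL_of_rat simp: mult of_rat QL_of_rat)
  qed simp
  also have "\<dots> = (\<Sum>i\<in>A. of_rat (c i) * tr_L (z i))"
    unfolding tr_L_def by (subst sum.swap) (simp add: sum_distrib_left)
  finally show ?thesis .
qed

lemma tr_L_1: "tr_L 1 = of_nat d"
proof -
  have "tr_L 1 = (\<Sum>\<sigma>\<in>G. 1)" unfolding tr_L_def by (rule sum.cong) (auto intro: aut.one aut.intro)
  thus ?thesis using galois by simp
qed

lemma tr_L_mult_basis_comb:
  assumes y: "y \<in> QL \<xi>"
  shows "tr_L (y * basis_comb c) = (\<Sum>i<d. of_rat (c i) * tr_L (y * \<xi> ^ i))"
proof -
  have "y * basis_comb c = (\<Sum>i<d. of_rat (c i) * (y * \<xi> ^ i))" unfolding basis_comb_def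
    by (simp add: sum_distrib_left algebra_simps)
  thus ?thesis using tr_L_rat_comb[of "{..<d}" "\<lambda>i. y * \<xi> ^ i" c] y
    by (simp add: QL_mult QL_power QL_xi)
qed

definition trace_form :: "rat mat" where
  "trace_form = mat d d (\<lambda>(i, j). SOME r. tr_L (\<xi> ^ (i + j)) = of_rat r)"

lemma trace_form_carrier: "trace_form \<in> carrier_mat d d"
  unfolding trace_form_def by simp

lemma of_rat_trace_form:
  "i < d \<Longrightarrow> j < d \<Longrightarrow> of_rat (trace_form $$ (i, j)) = tr_L (\<xi> ^ (i + j))"
  unfolding trace_form_def by (auto intro: someI_ex[OF tr_L_rat, symmetric] QL_power QL_xi)

lemma trace_form_mult_vec:
  assumes j: "j < d"
  shows "of_rat ((trace_form *\<^sub>v vec d c) $ j) = tr_L (basis_comb c * \<xi> ^ j)"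
proof -
  have "(trace_form *\<^sub>v vec d c) $ j = (\<Sum>i<d. trace_form $$ (j, i) * c i)"
    using j trace_form_carrier by (simp add: scalar_prod_def lessThan_atLeast0)
  hence "of_rat ((trace_form *\<^sub>v vec d c) $ j) = (\<Sum>i<d. of_rat (c i) * tr_L (\<xi> ^ (i + j)))"
    using j by (simp add: of_rat_sum of_rat_mult of_rat_trace_form add.commute mult.commute)
  also have "\<dots> = tr_L (\<Sum>i<d. of_rat (c i) * \<xi> ^ (i + j))"
    by (rule tr_L_rat_comb[symmetric]) (simp_all add: QL_power QL_xi)
  also have "(\<Sum>i<d. of_rat (c i) * \<xi> ^ (i + j)) = basis_comb c * \<xi> ^ j"
    unfolding basis_comb_def by (simp add: sum_distrib_right power_add mult.assoc)
  finally show ?thesis .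
qed

lemma det_trace_form: "det trace_form \<noteq> 0"
proof
  assume "det trace_form = 0"
  then obtain v where v: "v \<in> carrier_vec d" "v \<noteq> 0\<^sub>v d" "trace_form *\<^sub>v v = 0\<^sub>v d"
    using det_0_iff_vec_prod_zero_field[OF trace_form_carrier] by blast
  define c where "c i = v $ i" for i
  have v_eq: "v = vec d c" unfolding c_def using v(1) by (intro eq_vecI) auto
  define y where "y = basis_comb c"
  have y: "y \<in> QL \<xi>" unfolding y_def by (rule basis_comb_QL)
  have tr_y: "tr_L (y * \<xi> ^ j) = 0" if "j < d" for j
    using trace_form_mult_vec[OF that, of c] v(3) that unfolding y_def v_eq[symmetric] by simp
  have "y = 0"
  proof (rule ccontr)
    assume "y \<noteq> 0"
    then obtain c' where c': "inverse y = basis_comb c'"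
      using QL_basis_comb QL_inverse y by blast
    have "tr_L (y * inverse y) = 0" unfolding c' tr_L_mult_basis_comb[OF y] using tr_y by simp
    thus False using \<open>y \<noteq> 0\<close> tr_L_1 d_pos by simp
  qed
  have "v = 0\<^sub>v d"
  proof (rule eq_vecI)
    fix i assume "i < dim_vec (0\<^sub>v d :: rat vec)"
    thus "v $ i = 0\<^sub>v d $ i" using basis_comb_eq_0[of c i] \<open>y = 0\<close> unfolding y_def c_def by simp
  qed (use v in simp)
  thus False using v by simp
qed

definition trace_form_inv :: "rat mat" where
  "trace_form_inv = inverse (det trace_form) \<cdot>\<^sub>m adj_mat trace_form"

lemma trace_form_inv_carrier: "trace_form_inv \<in> carrier_mat d d"
  unfolding trace_form_inv_def using adj_mat(1)[OF trace_form_carrier] by simp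

lemma trace_form_inv_mult: "trace_form_inv * trace_form = 1\<^sub>m d"
proof -
  have "trace_form_inv * trace_form
      = inverse (det trace_form) \<cdot>\<^sub>m (adj_mat trace_form * trace_form)"
    unfolding trace_form_inv_def
    using mult_smult_assoc_mat[OF adj_mat(1)[OF trace_form_carrier] trace_form_carrier] .
  also have "\<dots> = 1\<^sub>m d"
    using adj_mat(3)[OF trace_form_carrier] det_trace_form by (auto intro!: eq_matI)
  finally show ?thesis .
qed

lemma OL_coords_trace_form_inv:
  assumes x: "basis_comb c \<in> OL \<xi>"
  obtains T :: "nat \<Rightarrow> int"
  where "\<And>i. i < d \<Longrightarrow> c i = (\<Sum>j<d. trace_form_inv $$ (i, j) * of_int (T j))"
proof -
  have "\<forall>j. \<exists>m. tr_L (basis_comb c * \<xi> ^ j) = of_int m"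
    using tr_L_OL_int OL_mult OL_power OL_xi x by blast
  then obtain T where T: "\<And>j. tr_L (basis_comb c * \<xi> ^ j) = of_int (T j)" by metis
  have c: "vec d c \<in> carrier_vec d" by simp
  have "trace_form *\<^sub>v vec d c = vec d (\<lambda>j. of_int (T j))"
  proof (rule eq_vecI)
    fix j assume "j < dim_vec (vec d (\<lambda>j. rat_of_int (T j)))"
    hence j: "j < d" by simp
    have "of_rat ((trace_form *\<^sub>v vec d c) $ j) = (of_rat (of_int (T j)) :: complex)"
      using trace_form_mult_vec[OF j] T by simp
    hence "(trace_form *\<^sub>v vec d c) $ j = of_int (T j)" by (simp only: of_rat_eq_iff)
    thus "(trace_form *\<^sub>v vec d c) $ j = vec d (\<lambda>j. of_int (T j)) $ j" using j by simp
  qed (use trace_form_carrier in simp)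
  hence "trace_form_inv *\<^sub>v vec d (\<lambda>j. of_int (T j)) = (trace_form_inv * trace_form) *\<^sub>v vec d c"
    using assoc_mult_mat_vec[OF trace_form_inv_carrier trace_form_carrier c] by simp
  also have "\<dots> = vec d c" using trace_form_inv_mult c by simp
  finally have inv: "trace_form_inv *\<^sub>v vec d (\<lambda>j. of_int (T j)) = vec d c" .
  have "c i = (\<Sum>j<d. trace_form_inv $$ (i, j) * of_int (T j))" if i: "i < d" for i
  proof -
    have "c i = (trace_form_inv *\<^sub>v vec d (\<lambda>j. of_int (T j))) $ i" using i by (simp add: inv)
    also have "\<dots> = (\<Sum>j<d. trace_form_inv $$ (i, j) * of_int (T j))"
      using i trace_form_inv_carrier by (simp add: scalar_prod_def lessThan_atLeast0)
    finally show ?thesis .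
  qed
  thus thesis by (rule that)
qed

lemma basis_comb_Ints_eq_poly:
  assumes "\<And>i. i < d \<Longrightarrow> c i \<in> \<int>"
  shows "\<exists>u. basis_comb c = poly (of_int_poly u) \<xi>"
proof -
  have "\<forall>i. \<exists>k. i < d \<longrightarrow> c i = of_int k" using assms Ints_cases by metis
  then obtain k where k: "\<And>i. i < d \<Longrightarrow> c i = of_int (k i)" by metis
  define u where "u = (\<Sum>i<d. monom (k i) i)"
  have "degree (of_int_poly u :: complex poly) < d"
    unfolding u_def using d_pos
    by (simp add: degree_map_poly)
      (intro degree_sum_less; auto intro: le_less_trans[OF degree_monom_le])
  hence "poly (of_int_poly u) \<xi> = (\<Sum>i<d. coeff (of_int_poly u) i * \<xi> ^ i)"
    by (rule poly_sum_coeff_less)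
  also have "\<dots> = basis_comb c"
    unfolding basis_comb_def u_def using k
    by (intro sum.cong) (auto simp: coeff_map_poly coeff_sum coeff_monom)
  finally show ?thesis by metis
qed

text \<open>D is a common denominator of the entries of the inverse trace form.\<close>
lemma OL_index_bound:
  obtains D :: int
  where "D > 0" "\<And>x. x \<in> OL \<xi> \<Longrightarrow> \<exists>u. of_int D * x = poly (of_int_poly u) \<xi>"
proof -
  have "finite ((\<lambda>(i, j). trace_form_inv $$ (i, j)) ` ({..<d} \<times> {..<d}))" by simp
  then obtain D :: int
    where D: "D > 0" "\<forall>r\<in>(\<lambda>(i, j). trace_form_inv $$ (i, j)) ` ({..<d} \<times> {..<d}). of_int D * r \<in> \<int>"
    by (rule rat_common_denominator)
  hence D_ij: "of_int D * trace_form_inv $$ (i, j) \<in> \<int>" if "i < d" "j < d" for i j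
    using that by auto
  have "\<exists>u. of_int D * x = poly (of_int_poly u) \<xi>" if x: "x \<in> OL \<xi>" for x
  proof -
    obtain c where c: "x = basis_comb c" using QL_basis_comb x by (auto simp: OL_iff)
    obtain T where T: "\<And>i. i < d \<Longrightarrow> c i = (\<Sum>j<d. trace_form_inv $$ (i, j) * of_int (T j))"
      using OL_coords_trace_form_inv x c by blast
    have "of_int D * c i \<in> \<int>" if i: "i < d" for i
    proof -
      have "of_int D * c i = (\<Sum>j<d. (of_int D * trace_form_inv $$ (i, j)) * of_int (T j))"
        unfolding T[OF i] sum_distrib_left by (simp add: mult.assoc)
      also have "\<dots> \<in> \<int>" using D_ij i by (auto intro!: Ints_sum Ints_mult[OF _ Ints_of_int])
      finally show ?thesis .
    qed
    hence "\<exists>u. basis_comb (\<lambda>i. of_int D * c i) = poly (of_int_poly u) \<xi>"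
      by (rule basis_comb_Ints_eq_poly)
    moreover have "basis_comb (\<lambda>i. of_int D * c i) = of_int D * x"
      unfolding c basis_comb_def by (simp add: sum_distrib_left of_rat_mult algebra_simps)
    ultimately show ?thesis by metis
  qed
  thus thesis using D(1) that by blast
qed

subsection \<open>Frobenius automorphisms\<close>

lemma conjugate_congruent_xi_power:
  assumes P: "prime_ideal_OL \<xi> P" and p: "prime p" and pP: "of_nat p \<in> P"
  obtains \<sigma> where "\<sigma> \<in> G" "\<sigma> \<xi> - \<xi> ^ p \<in> P"
proof -
  have I: "is_ideal_OL \<xi> P" using prime_ideal_OL_ideal[OF P] .
  have "poly Fq \<xi> ^ p - poly Fq (\<xi> ^ p) \<in> P"
    by (rule poly_power_prime_diff_in_ideal_OL[OF I p pP OL_xi])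
  hence "- poly Fq (\<xi> ^ p) \<in> P" using root p by (simp add: zero_power prime_gt_0_nat)
  hence "poly Fq (\<xi> ^ p) \<in> P" using ideal_OL_minus[OF I] by fastforce
  also have "poly Fq (\<xi> ^ p) = (\<Prod>\<sigma>\<in>G. \<xi> ^ p - \<sigma> \<xi>)"
    by (subst F_eq_prod_conjugates) (simp add: poly_prod)
  finally have "(\<Prod>\<sigma>\<in>G. \<xi> ^ p - \<sigma> \<xi>) \<in> P" .
  then obtain \<sigma> where "\<sigma> \<in> G" "\<xi> ^ p - \<sigma> \<xi> \<in> P"
    using prime_ideal_OL_prod[OF P finite_G, of "\<lambda>\<sigma>. \<xi> ^ p - \<sigma> \<xi>"]
      OL_diff[OF OL_power[OF OL_xi] OL_aut[OF _ OL_xi]] by blast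
  thus thesis using that ideal_OL_minus[OF I] by fastforce
qed

text \<open>The congruence for \<xi> propagates first to \<int>[\<xi>] and then, after multiplying by the
  index bound D (a unit modulo P), to all of O_L.\<close>
lemma frobenius_exists:
  assumes D: "\<And>x. x \<in> OL \<xi> \<Longrightarrow> \<exists>u. of_int D * x = poly (of_int_poly u) \<xi>"
    and p: "prime p" "\<not> int p dvd D" and P: "prime_ideal_OL \<xi> P" and pP: "of_nat p \<in> P"
  obtains \<sigma> where "\<sigma> \<in> G" "\<forall>x\<in>OL \<xi>. \<sigma> x - x ^ p \<in> P"
proof -
  have I: "is_ideal_OL \<xi> P" using prime_ideal_OL_ideal[OF P] .
  obtain \<sigma> where s: "\<sigma> \<in> G" and s_xi: "\<sigma> \<xi> - \<xi> ^ p \<in> P"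
    using conjugate_congruent_xi_power[OF P p(1) pP] .
  interpret s: aut \<xi> \<sigma> by (rule aut.intro, fact)
  have "\<sigma> x - x ^ p \<in> P" if x: "x \<in> OL \<xi>" for x
  proof -
    have xL: "x \<in> QL \<xi>" using x OL_iff by blast
    obtain u where u: "of_int D * x = poly (of_int_poly u) \<xi>" using D[OF x] by blast
    have "of_int D * \<sigma> x = \<sigma> (of_int D * x)" using s.mult[OF QL_of_int xL] s.of_int by simp
    hence su: "of_int D * \<sigma> x = poly (of_int_poly u) (\<sigma> \<xi>)" using u s.poly_int[OF QL_xi] by simp
    have "of_int D * (\<sigma> x - x ^ p) =
        (poly (of_int_poly u) (\<sigma> \<xi>) - poly (of_int_poly u) (\<xi> ^ p))
      - (poly (of_int_poly u) \<xi> ^ p - poly (of_int_poly u) (\<xi> ^ p))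
      + (of_int D ^ p - of_int D) * x ^ p"
      unfolding su[symmetric] u[symmetric] by (simp add: algebra_simps power_mult_distrib)
    also have "\<dots> \<in> P"
      by (intro ideal_OL_add[OF I] ideal_OL_diff[OF I] ideal_OL_poly_diff[OF I]
          poly_power_prime_diff_in_ideal_OL[OF I p(1) pP] ideal_OL_mult_right[OF I]
          of_int_power_prime_diff_in_ideal_OL[OF I p(1) pP] OL_aut[OF s] OL_power OL_xi x s_xi)
    finally have "of_int D * (\<sigma> x - x ^ p) \<in> P" .
    moreover have "of_int D \<notin> P" using prime_ideal_OL_of_int[OF P p(1) pP] p(2) by blast
    ultimately show ?thesis
      using prime_ideal_OL_prime[OF P] OL_of_int OL_diff OL_aut[OF s x] OL_power[OF x] by blast
  qed
  thus thesis using that s by blast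
qed

lemma frob_class_conj:
  assumes s: "\<sigma> \<in> frob_class \<xi> p" and t: "\<tau> \<in> G"
  shows "\<tau> \<circ> \<sigma> \<circ> inv \<tau> \<in> frob_class \<xi> p"
proof -
  from s obtain P where sG: "\<sigma> \<in> G" and P: "prime_ideal_OL \<xi> P" and pP: "of_nat p \<in> P"
    and frob: "\<forall>x\<in>OL \<xi>. \<sigma> x - x ^ p \<in> P"
    unfolding frob_class_def by blast
  interpret t: aut \<xi> \<tau> by (rule aut.intro, fact)
  interpret s: aut \<xi> \<sigma> by (rule aut.intro, fact)
  interpret ti: aut \<xi> "inv \<tau>" by (rule aut.intro, rule t.inv_aut)
  have "inv \<tau> ((\<tau> \<circ> \<sigma> \<circ> inv \<tau>) x - x ^ p) \<in> P" if x: "x \<in> OL \<xi>" for x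
  proof -
    have y: "inv \<tau> x \<in> OL \<xi>" "inv \<tau> x \<in> QL \<xi>" using OL_aut[OF t.inv_aut x] by (auto simp: OL_iff)
    have "inv \<tau> ((\<tau> \<circ> \<sigma> \<circ> inv \<tau>) x - x ^ p) = \<sigma> (inv \<tau> x) - inv \<tau> x ^ p"
      using x y(2) by (simp add: ti.diff ti.power t.inv_apply s.QL t.QL QL_power OL_iff)
    thus ?thesis using frob y(1) by simp
  qed
  moreover have "(\<tau> \<circ> \<sigma> \<circ> inv \<tau>) x - x ^ p \<in> OL \<xi>" if "x \<in> OL \<xi>" for x
    using that OL_aut[OF t] OL_aut[OF sG] OL_aut[OF t.inv_aut] by (auto intro: OL_diff OL_power)
  moreover have "of_nat p \<in> OL \<xi> \<inter> inv \<tau> -` P" using pP ti.of_nat OL_of_nat by simp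
  moreover have "\<tau> \<circ> \<sigma> \<circ> inv \<tau> \<in> G" using Aut_L_comp[OF Aut_L_comp[OF t sG] t.inv_aut] .
  ultimately show ?thesis
    using prime_ideal_OL_vimage[OF t.inv_aut P] unfolding frob_class_def by blast
qed

lemma frob_class_subset_conj_class:
  assumes K: "conj_class G K" and "frob_class \<xi> p \<noteq> {}" "frob_class \<xi> p \<subseteq> K"
  shows "frob_class \<xi> p = K"
proof
  show "frob_class \<xi> p \<subseteq> K" by fact
  from K obtain g where g: "g \<in> G" and K_eq: "K = {h \<circ> g \<circ> inv h | h. h \<in> G}"
    unfolding conj_class_def by blast
  from assms(2,3) obtain \<sigma> where s: "\<sigma> \<in> frob_class \<xi> p" "\<sigma> \<in> K" by blast
  then obtain h0 where h0: "h0 \<in> G" and s_eq: "\<sigma> = h0 \<circ> g \<circ> inv h0" unfolding K_eq by blast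
  interpret h0: aut \<xi> h0 by (rule aut.intro, fact)
  show "K \<subseteq> frob_class \<xi> p"
  proof
    fix \<kappa> assume "\<kappa> \<in> K"
    then obtain h where h: "h \<in> G" and k_eq: "\<kappa> = h \<circ> g \<circ> inv h" unfolding K_eq by blast
    interpret h: aut \<xi> h by (rule aut.intro, fact)
    define \<tau> where "\<tau> = h \<circ> inv h0"
    have t: "\<tau> \<in> G" unfolding \<tau>_def using Aut_L_comp[OF h h0.inv_aut] .
    interpret t: aut \<xi> \<tau> by (rule aut.intro, fact)
    have "inv \<tau> = h0 \<circ> inv h"
    proof
      fix x
      have "\<tau> (h0 (inv h x)) = x" unfolding \<tau>_def by (simp add: h0.inv_apply h.apply_inv)
      thus "inv \<tau> x = (h0 \<circ> inv h) x" using t.inv_apply by (metis comp_apply)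
    qed
    hence "\<tau> \<circ> \<sigma> \<circ> inv \<tau> = \<kappa>" unfolding k_eq s_eq \<tau>_def by (auto simp: h0.inv_apply)
    thus "\<kappa> \<in> frob_class \<xi> p" using frob_class_conj[OF s(1) t] by simp
  qed
qed

lemma irreducible_rat_F: "irreducible (of_int_poly F :: rat poly)"
proof (rule irreducibleI)
  define Fr where "Fr = (of_int_poly F :: rat poly)"
  have dFr: "degree Fr = d" unfolding Fr_def by (simp add: degree_map_poly)
  show "Fr \<noteq> 0" using dFr d_pos by auto
  thus "\<not> is_unit Fr" using dFr d_pos is_unit_iff_degree by auto
  fix a b assume ab: "Fr = a * b"
  show "is_unit a \<or> is_unit b"
  proof (rule ccontr)
    assume nu: "\<not> (is_unit a \<or> is_unit b)"
    have a0: "a \<noteq> 0" and b0: "b \<noteq> 0" using ab \<open>Fr \<noteq> 0\<close> by auto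
    have "poly (of_rat_poly Fr) \<xi> = 0" unfolding Fr_def of_rat_poly_of_int_poly by (rule root)
    hence "poly (of_rat_poly a) \<xi> = 0 \<or> poly (of_rat_poly b) \<xi> = 0"
      unfolding ab of_rat_poly_mult by simp
    moreover have "degree a > 0" "degree b > 0" using nu a0 b0 is_unit_iff_degree by blast+
    hence "degree a < d" "degree b < d" using ab dFr degree_mult_eq[OF a0 b0] by simp_all
    ultimately obtain c where c: "c = a \<or> c = b" "poly (of_rat_poly c) \<xi> = 0" "degree c < d"
      by blast
    have "\<forall>\<sigma>\<in>G. poly (of_rat_poly c) (\<sigma> \<xi>) = 0"
      using aut.poly[OF aut.intro QL_xi] aut.zero[OF aut.intro] c(2) by metis
    hence "of_rat_poly c = 0" using vanishing_poly_eq_0 c(3) by (simp add: degree_map_poly)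
    thus False using c(1) a0 b0 by auto
  qed
qed

text \<open>F is separable, so F' is invertible modulo F over \<rat>; E clears the denominators.\<close>
lemma derivative_inverse:
  obtains E :: int and B :: "int poly"
  where "E \<noteq> 0" "of_int E = poly (of_int_poly B) \<xi> * poly (of_int_poly (pderiv F)) \<xi>"
proof -
  define Fr where "Fr = (of_int_poly F :: rat poly)"
  have dFr: "degree Fr = d" unfolding Fr_def by (simp add: degree_map_poly)
  have "\<not> Fr dvd pderiv Fr"
  proof
    assume dv: "Fr dvd pderiv Fr"
    have "pderiv Fr \<noteq> 0" using dFr d_pos by (simp add: pderiv_eq_0_iff)
    hence "degree Fr \<le> degree (pderiv Fr)" using dvd_imp_degree_le[OF dv] by simp
    thus False using dFr d_pos by (simp add: degree_pderiv)
  qed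
  hence "coprime Fr (pderiv Fr)"
    using prime_elem_imp_coprime[OF irreducible_imp_prime_elem[OF irreducible_rat_F[folded Fr_def]]]
    by blast
  hence "gcd Fr (pderiv Fr) = 1" by simp
  then obtain a b where ab: "a * Fr + b * pderiv Fr = 1"
    using bezout_coefficients_fst_snd[of Fr "pderiv Fr"] by metis
  obtain N B where N: "N > 0" "of_int_poly B = Polynomial.smult (of_int N) b"
    by (rule rat_poly_clear_denominators)
  have "of_rat_poly (pderiv Fr) = of_int_poly (pderiv F)"
    unfolding Fr_def by (simp add: hom_distribs of_rat_poly_of_int_poly[symmetric])
  hence "poly (of_rat_poly b) \<xi> * poly (of_int_poly (pderiv F)) \<xi> = 1"
    using arg_cong[OF ab, of "\<lambda>q. poly (of_rat_poly q) \<xi>"] root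
    by (simp add: hom_distribs of_rat_poly_mult Fr_def of_rat_poly_of_int_poly)
  hence "of_int N
      = poly (of_rat_poly (Polynomial.smult (of_int N) b)) \<xi> * poly (of_int_poly (pderiv F)) \<xi>"
    by (simp add: hom_distribs)
  also have "of_rat_poly (Polynomial.smult (of_int N) b) = of_int_poly B"
    unfolding N(2)[symmetric] by (rule of_rat_poly_of_int_poly)
  finally show thesis using N(1) that[of N B] by simp
qed

end

section \<open>Unramified primes\<close>

locale prime_above = gal +
  fixes P :: "complex set" and p :: nat
  assumes P: "prime_ideal_OL \<xi> P" and p: "prime p" and pP: "of_nat p \<in> P"

begin

abbreviation ev :: "int poly \<Rightarrow> complex" where "ev u \<equiv> poly (of_int_poly u) \<xi>"

lemma ideal_P: "is_ideal_OL \<xi> P" using prime_ideal_OL_ideal[OF P] .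

lemma ev_OL: "ev u \<in> OL \<xi>" by (intro OL_poly_int OL_xi)

lemma ev_mult_in_P: "ev u \<in> P \<Longrightarrow> ev (u * v) \<in> P"
  using ideal_OL_mult_right[OF ideal_P ev_OL] by (simp add: hom_distribs)

lemma ev_diff_in_P: "ev u \<in> P \<Longrightarrow> ev v \<in> P \<Longrightarrow> ev (u - v) \<in> P"
  using ideal_OL_diff[OF ideal_P] by (simp add: hom_distribs)

lemma ev_smult_p_in_P: "ev (Polynomial.smult (int p) v) \<in> P"
  using ideal_OL_mult_right[OF ideal_P ev_OL pP] by (simp add: hom_distribs mult.commute)

lemma ev_smult_in_P: "ev u \<in> P \<Longrightarrow> ev (Polynomial.smult c u) \<in> P"
  using ideal_OL_mult_left[OF ideal_P OL_of_int] by (simp add: hom_distribs)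

text \<open>If r(\<xi>) \<in> P and r is nonzero modulo p, then truncating r at its highest coefficient
  prime to p and normalising that coefficient modulo p gives a monic h with h(\<xi>) \<in> P.\<close>
lemma monic_poly_in_P:
  assumes r: "ev r \<in> P" and nd: "\<exists>i. \<not> int p dvd coeff r i"
  obtains h where "ev h \<in> P" "lead_coeff h = 1" "degree h \<le> degree r"
proof -
  define J where "J = {i. \<not> int p dvd coeff r i}"
  have J: "J \<subseteq> {..degree r}" unfolding J_def by (auto intro: le_degree)
  hence fJ: "finite J" using finite_subset by blast
  define j where "j = Max J"
  have jJ: "j \<in> J" unfolding j_def using fJ nd unfolding J_def by (intro Max_in) auto
  have above_j: "i > j \<Longrightarrow> int p dvd coeff r i" for i
    using Max_ge[OF fJ, of i] unfolding j_def J_def by force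
  define c where "c = coeff r j"
  have "coprime (int p) c" using jJ p prime_imp_coprime[of "int p" c] unfolding c_def J_def by simp
  hence "gcd (int p) c = 1" by simp
  then obtain u v where "u * int p + v * c = 1" using bezout_int[of "int p" c] by metis
  hence ct: "v * c - int p * (- u) = 1" by (simp add: mult.commute)
  define rh where "rh = (\<Sum>i\<in>{j<..degree r}. monom (coeff r i) i)"
  have coeff_rh: "coeff rh i = (if j < i then coeff r i else 0)" for i
    unfolding rh_def coeff_sum by (auto simp: coeff_monom coeff_eq_0 intro: le_degree)
  have "rh = Polynomial.smult (int p) (map_poly (\<lambda>x. x div int p) rh)"
    by (rule poly_eqI) (auto simp: coeff_map_poly coeff_rh above_j)
  hence r1: "ev (r - rh) \<in> P" using ev_diff_in_P[OF r] ev_smult_p_in_P by metis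
  define h where "h = Polynomial.smult v (r - rh) - Polynomial.smult (int p) (monom (- u) j)"
  have coeff_h: "coeff h i = (if i < j then v * coeff r i else if i = j then 1 else 0)" for i
    unfolding h_def using ct by (simp add: coeff_rh coeff_monom c_def)
  have "degree h = j"
  proof (rule antisym)
    show "degree h \<le> j" by (rule degree_le) (auto simp: coeff_h)
    show "j \<le> degree h" by (rule le_degree) (simp add: coeff_h)
  qed
  moreover have "ev h \<in> P" unfolding h_def
    using ev_diff_in_P[OF ev_smult_in_P[OF r1] ev_smult_p_in_P] .
  moreover have "j \<le> degree r" using J jJ by auto
  ultimately show thesis using that coeff_h by simp
qed

definition min_poly_P :: "int poly" where
  "min_poly_P = (ARG_MIN degree g. ev g \<in> P \<and> lead_coeff g = 1)"

lemma min_poly_P: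
  "ev min_poly_P \<in> P" "lead_coeff min_poly_P = 1"
  "\<And>h. ev h \<in> P \<Longrightarrow> lead_coeff h = 1 \<Longrightarrow> degree min_poly_P \<le> degree h"
proof -
  have "ev F \<in> P \<and> lead_coeff F = 1" using monic root ideal_OL_0[OF ideal_P] by simp
  from arg_min_nat_lemma[of "\<lambda>g. ev g \<in> P \<and> lead_coeff g = 1", OF this, of degree]
  show "ev min_poly_P \<in> P" "lead_coeff min_poly_P = 1"
    "\<And>h. ev h \<in> P \<Longrightarrow> lead_coeff h = 1 \<Longrightarrow> degree min_poly_P \<le> degree h"
    unfolding min_poly_P_def by blast+
qed

lemma ev_in_P_decompose:
  assumes u: "ev u \<in> P"
  obtains q s where "u = min_poly_P * q + Polynomial.smult (int p) s"
proof -
  have g0: "min_poly_P \<noteq> 0" using min_poly_P(2) by auto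
  obtain q r where qr: "pseudo_divmod u min_poly_P = (q, r)" by (cases "pseudo_divmod u min_poly_P")
  have u_eq: "u = min_poly_P * q + r" using pseudo_divmod(1)[OF g0 qr] min_poly_P(2) by simp
  have "ev r \<in> P"
    using ev_diff_in_P[OF u ev_mult_in_P[OF min_poly_P(1)], of q] u_eq by (simp add: algebra_simps)
  have all: "\<forall>i. int p dvd coeff r i"
  proof (rule ccontr)
    assume "\<not> (\<forall>i. int p dvd coeff r i)"
    then obtain h where h: "ev h \<in> P" "lead_coeff h = 1" "degree h \<le> degree r"
      using monic_poly_in_P[OF \<open>ev r \<in> P\<close>] by blast
    have "r \<noteq> 0" using \<open>\<not> (\<forall>i. _)\<close> by auto
    hence "degree r < degree min_poly_P" using pseudo_divmod(2)[OF g0 qr] by simp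
    thus False using min_poly_P(3)[OF h(1,2)] h(3) by simp
  qed
  have "r = Polynomial.smult (int p) (map_poly (\<lambda>x. x div int p) r)"
    by (rule poly_eqI) (use all in \<open>auto simp: coeff_map_poly\<close>)
  thus thesis using that u_eq by metis
qed

lemma cofactor_notin_P:
  assumes F: "F = min_poly_P * k + Polynomial.smult (int p) s0"
    and E: "of_int E = ev B * ev (pderiv F)" "\<not> int p dvd E"
  shows "ev k \<notin> P"
proof
  assume "ev k \<in> P"
  then obtain q s where "k = min_poly_P * q + Polynomial.smult (int p) s"
    by (rule ev_in_P_decompose)
  hence "F = min_poly_P * (min_poly_P * q) + Polynomial.smult (int p) (min_poly_P * s + s0)"
    using F by (simp add: algebra_simps smult_add_right)
  hence "pderiv F = min_poly_P * (pderiv min_poly_P * q + pderiv (min_poly_P * q))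
      + Polynomial.smult (int p) (pderiv (min_poly_P * s + s0))"
    by (simp add: pderiv_add pderiv_mult pderiv_smult algebra_simps)
  hence "ev (pderiv F) = ev min_poly_P * ev (pderiv min_poly_P * q + pderiv (min_poly_P * q))
      + of_nat p * ev (pderiv (min_poly_P * s + s0))"
    by (simp add: hom_distribs)
  also have "\<dots> \<in> P"
    by (intro ideal_OL_add[OF ideal_P] ideal_OL_mult_right[OF ideal_P] ev_OL min_poly_P(1) pP)
  finally have "of_int E \<in> P" unfolding E(1) by (rule ideal_OL_mult_left[OF ideal_P ev_OL])
  thus False using prime_ideal_OL_of_int[OF P p pP] E(2) by blast
qed

lemma cofactor_mult_divisible:
  assumes F: "F = min_poly_P * k + Polynomial.smult (int p) s0"
    and D: "\<And>x. x \<in> OL \<xi> \<Longrightarrow> \<exists>u. of_int D * x = ev u" and x: "x \<in> P"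
  obtains w where "w \<in> OL \<xi>" "ev k * (of_int D * x) = of_nat p * w"
proof -
  obtain u where u: "of_int D * x = ev u" using D ideal_OL_subset[OF ideal_P x] by blast
  have "ev u \<in> P" unfolding u[symmetric] by (rule ideal_OL_mult_left[OF ideal_P OL_of_int x])
  then obtain q s where "u = min_poly_P * q + Polynomial.smult (int p) s"
    by (rule ev_in_P_decompose)
  hence "ev k * ev u = (ev k * ev min_poly_P) * ev q + of_nat p * (ev k * ev s)"
    by (simp add: hom_distribs algebra_simps)
  also have "ev k * ev min_poly_P = - (of_nat p * ev s0)"
    using arg_cong[OF F, of ev] root by (simp add: hom_distribs algebra_simps eq_neg_iff_add_eq_0)
  finally have "ev k * (of_int D * x) = of_nat p * (ev k * ev s - ev s0 * ev q)"
    unfolding u by (simp add: algebra_simps)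
  thus thesis using that ev_OL by (blast intro: OL_diff OL_mult)
qed

text \<open>Write F = g k + p s0 with g the minimal polynomial of \<xi> modulo P and K = k(\<xi>) \<notin> P. Then
  K D P \<subseteq> p O_L, so p \<in> P^2 would give (K D)^2 \<in> p O_L \<subseteq> P.\<close>
lemma p_notin_P_squared:
  assumes D: "\<And>x. x \<in> OL \<xi> \<Longrightarrow> \<exists>u. of_int D * x = ev u" "\<not> int p dvd D"
    and E: "of_int E = ev B * ev (pderiv F)" "\<not> int p dvd E"
  shows "of_nat p \<notin> ideal_prod_OL P P"
proof
  assume "of_nat p \<in> ideal_prod_OL P P"
  then obtain n :: nat and f g where p_eq: "of_nat p = (\<Sum>i<n. f i * g i)"
    and fg: "\<And>i. i < n \<Longrightarrow> f i \<in> P \<and> g i \<in> P"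
    unfolding ideal_prod_OL_def by blast
  have "ev F \<in> P" using root ideal_OL_0[OF ideal_P] by simp
  then obtain k s0 where F: "F = min_poly_P * k + Polynomial.smult (int p) s0"
    by (rule ev_in_P_decompose)
  define K where "K = ev k"
  have "\<forall>i. \<exists>a b. i < n \<longrightarrow> a \<in> OL \<xi> \<and> b \<in> OL \<xi> \<and>
      K * (of_int D * f i) = of_nat p * a \<and> K * (of_int D * g i) = of_nat p * b"
    using cofactor_mult_divisible[OF F D(1)] fg unfolding K_def by metis
  then obtain a b where ab: "\<And>i. i < n \<Longrightarrow> a i \<in> OL \<xi> \<and> b i \<in> OL \<xi> \<and>
      K * (of_int D * f i) = of_nat p * a i \<and> K * (of_int D * g i) = of_nat p * b i"
    by metis
  have "(K * of_int D) ^ 2 * of_nat p = (\<Sum>i<n. (K * (of_int D * f i)) * (K * (of_int D * g i)))"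
    unfolding p_eq sum_distrib_left by (simp add: power2_eq_square mult_ac)
  also have "\<dots> = of_nat p * (of_nat p * (\<Sum>i<n. a i * b i))"
    unfolding sum_distrib_left using ab by (intro sum.cong) (simp_all add: mult_ac)
  finally have "(K * of_int D) * (K * of_int D) = of_nat p * (\<Sum>i<n. a i * b i)"
    using p by (simp add: power2_eq_square mult.assoc)
  also have "\<dots> \<in> P" using ab by (intro ideal_OL_mult_right[OF ideal_P] OL_sum OL_mult pP) auto
  finally have "K \<in> P \<or> of_int D \<in> P"
    using prime_ideal_OL_prime[OF P] OL_mult ev_OL OL_of_int unfolding K_def by metis
  thus False
    using cofactor_notin_P[OF F E] prime_ideal_OL_of_int[OF P p pP] D(2) unfolding K_def by blast
qed

end

context gal begin

lemma unramified_if_not_dvd: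
  assumes D: "\<And>x. x \<in> OL \<xi> \<Longrightarrow> \<exists>u. of_int D * x = poly (of_int_poly u) \<xi>"
    and E: "of_int E = poly (of_int_poly B) \<xi> * poly (of_int_poly (pderiv F)) \<xi>"
    and p_prime: "prime p" and not_dvd: "\<not> int p dvd D" "\<not> int p dvd E"
  shows "unramified \<xi> p"
  unfolding unramified_def
proof (intro allI impI)
  fix P assume "prime_ideal_OL \<xi> P \<and> of_nat p \<in> P"
  then interpret prime_above F \<xi> P p by unfold_locales (use p_prime in auto)
  show "of_nat p \<notin> ideal_prod_OL P P" by (rule p_notin_P_squared[OF D not_dvd(1) E not_dvd(2)])
qed

end

section \<open>The recurrence sequence\<close>

locale frobenius_sequence = gal +
  fixes a :: "nat \<Rightarrow> rat" and z :: "(complex \<Rightarrow> complex) \<Rightarrow> complex"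
    and K :: "(complex \<Rightarrow> complex) set"
  assumes recur: "\<forall>n. a (n + degree F) = - (\<Sum>k<degree F. of_int (coeff F k) * a (n + k))"
    and K: "conj_class (Aut_L \<xi>) K"
    and zL: "\<forall>\<sigma>\<in>Aut_L \<xi>. z \<sigma> \<in> QL \<xi>"
    and zsol: "\<forall>i<degree F. (\<Sum>\<sigma>\<in>Aut_L \<xi>. inv \<sigma> (\<xi> ^ i) * z \<sigma>) = of_rat (a i)"
    and hyp: "\<forall>\<tau>\<in>Aut_L \<xi>. (\<Sum>\<sigma>\<in>Aut_L \<xi>. z \<sigma> * \<tau> (inv \<sigma> \<xi>)) = (if \<tau> \<in> K then 1 else 0)"

begin

text \<open>Both sides satisfy the recurrence, since each conjugate inv \<tau> \<xi> is a root of F, and they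
  agree on the initial values by the choice of z.\<close>
lemma a_closed_form: "of_rat (a n) = (\<Sum>\<tau>\<in>G. z \<tau> * inv \<tau> \<xi> ^ n)"
proof (induction n rule: less_induct)
  case (less n)
  have inv_power: "inv \<tau> (\<xi> ^ i) = inv \<tau> \<xi> ^ i" if "\<tau> \<in> G" for \<tau> i
    using aut.power[OF aut.intro[OF Aut_L_inv[OF that]] QL_xi] .
  show ?case
  proof (cases "n < d")
    case True
    thus ?thesis using zsol by (simp add: inv_power mult.commute)
  next
    case False
    then obtain m where n: "n = m + d" by (metis add.commute le_add_diff_inverse not_less)
    have root_inv: "inv \<tau> \<xi> ^ d = - (\<Sum>k<d. of_int (coeff F k) * inv \<tau> \<xi> ^ k)" if "\<tau> \<in> G" for \<tau>
      using monic_root_power_degree[OF monic root_conjugate[OF Aut_L_inv[OF that]]] .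
    have "of_rat (a n) = - (\<Sum>k<d. of_int (coeff F k) * of_rat (a (m + k)))"
      unfolding n using recur by (simp add: of_rat_minus of_rat_sum of_rat_mult)
    also have "\<dots> = - (\<Sum>k<d. of_int (coeff F k) * (\<Sum>\<tau>\<in>G. z \<tau> * inv \<tau> \<xi> ^ (m + k)))"
      using less n by simp
    also have "\<dots> = (\<Sum>\<tau>\<in>G. z \<tau> * inv \<tau> \<xi> ^ m * (- (\<Sum>k<d. of_int (coeff F k) * inv \<tau> \<xi> ^ k)))"
      by (simp add: sum_distrib_left sum_negf power_add algebra_simps sum.swap[of _ "{..<d}"])
    also have "\<dots> = (\<Sum>\<tau>\<in>G. z \<tau> * inv \<tau> \<xi> ^ n)"
      by (rule sum.cong) (simp_all add: root_inv[symmetric] n power_add)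
    finally show ?thesis .
  qed
qed

lemma a_common_denominator:
  obtains N :: int where "N > 0" "\<And>n. of_int N * a n \<in> \<int>"
proof -
  obtain N :: int where N: "N > 0" "\<forall>r\<in>a ` {..<d}. of_int N * r \<in> \<int>"
    by (rule rat_common_denominator[of "a ` {..<d}"]) simp_all
  have "of_int N * a n \<in> \<int>" for n
  proof (induction n rule: less_induct)
    case (less n)
    show ?case
    proof (cases "n < d")
      case True thus ?thesis using N(2) by simp
    next
      case False
      then obtain m where n: "n = m + d" by (metis add.commute le_add_diff_inverse not_less)
      have "of_int N * a n = - (\<Sum>k<d. of_int (coeff F k) * (of_int N * a (m + k)))"
        unfolding n using recur by (simp add: sum_distrib_left algebra_simps)
      also have "\<dots> \<in> \<int>"
      proof (intro Ints_minus Ints_sum)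
        fix k assume "k \<in> {..<d}"
        hence "of_int N * a (m + k) \<in> \<int>" using less n by simp
        thus "of_int (coeff F k) * (of_int N * a (m + k)) \<in> \<int>" using Ints_mult[OF Ints_of_int]
          by blast
      qed
      finally show ?thesis .
    qed
  qed
  thus thesis using N(1) that by blast
qed

text \<open>By the closed form, N (a_p - \<phi>_K(\<sigma>)) is the sum over \<tau> of N z_\<tau> ((inv \<tau> \<xi>)^p - \<sigma> (inv \<tau> \<xi>)),
  which lies in P when N z_\<tau> \<in> \<int>[\<xi>].\<close>
lemma congruence_at_frobenius:
  assumes N: "\<forall>\<tau>\<in>G. \<exists>u. of_int N * z \<tau> = poly (of_int_poly u) \<xi>" "\<not> int p dvd N"
    and N2: "\<And>n. of_int N2 * a n \<in> \<int>" "\<not> int p dvd N2"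
    and p: "prime p" and s: "\<sigma> \<in> G" and P: "prime_ideal_OL \<xi> P" and pP: "of_nat p \<in> P"
    and frob: "\<forall>x\<in>OL \<xi>. \<sigma> x - x ^ p \<in> P"
  shows "rat_cong_mod p (a p) (if \<sigma> \<in> K then 1 else 0)"
proof -
  have I: "is_ideal_OL \<xi> P" using prime_ideal_OL_ideal[OF P] .
  define c :: int where "c = (if \<sigma> \<in> K then 1 else 0)"
  obtain m where m: "of_int N2 * a p = of_int m" using N2(1) by (meson Ints_cases)
  have "of_int c = (\<Sum>\<tau>\<in>G. z \<tau> * \<sigma> (inv \<tau> \<xi>))" using hyp s unfolding c_def by simp
  hence "of_int N * (of_rat (a p) - of_int c)
      = (\<Sum>\<tau>\<in>G. (of_int N * z \<tau>) * - (\<sigma> (inv \<tau> \<xi>) - inv \<tau> \<xi> ^ p))"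
    unfolding a_closed_form by (simp add: sum_distrib_left sum_subtractf algebra_simps)
  also have "\<dots> \<in> P"
  proof (rule ideal_OL_sum[OF I])
    fix \<tau> assume t: "\<tau> \<in> G"
    obtain u where u: "of_int N * z \<tau> = poly (of_int_poly u) \<xi>" using N(1) t by blast
    have "inv \<tau> \<xi> \<in> OL \<xi>" using OL_aut[OF Aut_L_inv[OF t] OL_xi] .
    thus "(of_int N * z \<tau>) * - (\<sigma> (inv \<tau> \<xi>) - inv \<tau> \<xi> ^ p) \<in> P"
      unfolding u using frob
        by (intro ideal_OL_mult_left[OF I] ideal_OL_minus[OF I] OL_poly_int OL_xi) auto
  qed
  finally have "of_int N2 * (of_int N * (of_rat (a p) - of_int c)) \<in> P"
    by (rule ideal_OL_mult_left[OF I OL_of_int])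
  also have "of_int N2 * (of_int N * (of_rat (a p) - of_int c))
      = (of_int (N * (m - N2 * c)) :: complex)"
    using arg_cong[OF m, of "of_rat :: rat \<Rightarrow> complex"] by (simp add: of_rat_mult algebra_simps)
  finally have "int p dvd N * (m - N2 * c)" using prime_ideal_OL_of_int[OF P p pP] by blast
  hence "int p dvd m - N2 * c" using N(2) p prime_dvd_mult_iff[of "int p"] by simp
  moreover have "a p - of_int c = of_int (m - N2 * c) / of_int N2"
    using m N2(2) by (cases "N2 = 0") (auto simp: field_simps)
  ultimately show ?thesis using rat_cong_modI[OF p N2(2)] unfolding c_def by (simp split: if_splits)
qed

lemma frob_class_congruence:
  assumes D: "\<And>x. x \<in> OL \<xi> \<Longrightarrow> \<exists>u. of_int D * x = poly (of_int_poly u) \<xi>"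
    and N: "\<forall>\<tau>\<in>G. \<exists>u. of_int N * z \<tau> = poly (of_int_poly u) \<xi>"
    and N2: "\<And>n. of_int N2 * a n \<in> \<int>"
    and p: "prime p" "\<not> int p dvd D" "\<not> int p dvd N" "\<not> int p dvd N2"
  shows "rat_cong_mod p (a p) (if frob_class \<xi> p = K then 1 else 0)"
proof -
  obtain P where P: "prime_ideal_OL \<xi> P" "of_nat p \<in> P"
    using prime_ideal_OL_above[OF p(1)] by blast
  obtain \<sigma> where "\<sigma> \<in> G" "\<forall>x\<in>OL \<xi>. \<sigma> x - x ^ p \<in> P"
    using frobenius_exists[OF D p(1,2) P] by blast
  hence frob: "\<sigma> \<in> frob_class \<xi> p" using P unfolding frob_class_def by blast
  have cong: "rat_cong_mod p (a p) (if \<sigma>' \<in> K then 1 else 0)" if "\<sigma>' \<in> frob_class \<xi> p" for \<sigma>'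
    using that congruence_at_frobenius[OF N p(3) N2 p(4) p(1)] unfolding frob_class_def by blast
  show ?thesis
  proof (cases "frob_class \<xi> p = K")
    case True thus ?thesis using cong[OF frob] frob by simp
  next
    case False
    then obtain \<sigma>' where "\<sigma>' \<in> frob_class \<xi> p" "\<sigma>' \<notin> K"
      using frob_class_subset_conj_class[OF K] frob by blast
    thus ?thesis using cong[of \<sigma>'] False by simp
  qed
qed

text \<open>M is the product of the index bound D, the constant E of derivative_inverse and the
  denominators of z and of the sequence.\<close>
lemma good_primes:
  obtains M :: int where "M \<noteq> 0"
    "\<And>p. prime p \<Longrightarrow> \<not> int p dvd M \<Longrightarrow> unramified \<xi> p \<and> p_integral p (a p) \<and>
       rat_cong_mod p (a p) (if frob_class \<xi> p = K then 1 else 0)"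
proof -
  obtain D :: int where D: "D > 0" "\<And>x. x \<in> OL \<xi> \<Longrightarrow> \<exists>u. of_int D * x = poly (of_int_poly u) \<xi>"
    using OL_index_bound by blast
  obtain E :: int and B where E: "E \<noteq> 0"
    "of_int E = poly (of_int_poly B) \<xi> * poly (of_int_poly (pderiv F)) \<xi>"
    by (rule derivative_inverse)
  obtain N :: int where N: "N > 0" "\<forall>\<tau>\<in>G. \<exists>u. of_int N * z \<tau> = poly (of_int_poly u) \<xi>"
    using QL_common_denominator[of "z ` G" \<xi>] finite_G zL by auto
  obtain N2 :: int where N2: "N2 > 0" "\<And>n. of_int N2 * a n \<in> \<int>"
    using a_common_denominator by blast
  have "unramified \<xi> p \<and> p_integral p (a p) \<and>
      rat_cong_mod p (a p) (if frob_class \<xi> p = K then 1 else 0)"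
    if p: "prime p" "\<not> int p dvd D * E * N * N2" for p
  proof -
    have nd: "\<not> int p dvd D" "\<not> int p dvd E" "\<not> int p dvd N" "\<not> int p dvd N2"
      using p(2) by (meson dvd_mult dvd_mult2)+
    obtain m where "a p = of_int m / of_int N2"
      using N2 by (metis Ints_cases nonzero_mult_div_cancel_left of_int_0_less_iff less_irrefl)
    hence "p_integral p (a p)" using p_integral_int_div[OF nd(4)] by simp
    thus ?thesis
      using unramified_if_not_dvd[OF D(2) E(2) p(1) nd(1,2)]
        frob_class_congruence[OF D(2) N(2) N2(2) p(1) nd(1,3,4)] by blast
  qed
  moreover have "D * E * N * N2 \<noteq> 0" using D(1) E(1) N(1) N2(1) by simp
  ultimately show thesis using that by blast
qed

end

theorem mainTheorem6:
  fixes F :: "int poly" and \<xi> :: complex and a :: "nat \<Rightarrow> rat"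
    and K :: "(complex \<Rightarrow> complex) set" and z :: "(complex \<Rightarrow> complex) \<Rightarrow> complex"
  assumes monic: "lead_coeff F = 1"
    and irred: "irreducible F"
    and root: "poly (map_poly of_int F) \<xi> = 0"
    and galois: "card (Aut_L \<xi>) = degree F"
    and recur: "\<forall>n. a (n + degree F) = - (\<Sum>k<degree F. of_int (coeff F k) * a (n + k))"
    and K: "conj_class (Aut_L \<xi>) K"
    and zL: "\<forall>\<sigma>\<in>Aut_L \<xi>. z \<sigma> \<in> QL \<xi>"
    and zsol: "\<forall>i<degree F. (\<Sum>\<sigma>\<in>Aut_L \<xi>. inv \<sigma> (\<xi> ^ i) * z \<sigma>) = of_rat (a i)"
    and hyp: "\<forall>\<tau>\<in>Aut_L \<xi>. (\<Sum>\<sigma>\<in>Aut_L \<xi>. z \<sigma> * \<tau> (inv \<sigma> \<xi>)) = (if \<tau> \<in> K then 1 else 0)"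
  shows "\<exists>S. finite S \<and> (\<forall>p. prime p \<and> p \<notin> S \<longrightarrow>
           unramified \<xi> p \<and> p_integral p (a p) \<and>
           rat_cong_mod p (a p) (if frob_class \<xi> p = K then 1 else 0))"
proof -
  interpret frobenius_sequence F \<xi> a z K
    by unfold_locales (use monic root galois recur K zL zsol hyp in auto)
  obtain M :: int where M: "M \<noteq> 0"
    "\<And>p. prime p \<Longrightarrow> \<not> int p dvd M \<Longrightarrow> unramified \<xi> p \<and> p_integral p (a p) \<and>
       rat_cong_mod p (a p) (if frob_class \<xi> p = K then 1 else 0)"
    using good_primes by blast
  show ?thesis
    using finite_prime_divisors_int[OF M(1)] M(2)
    by (intro exI[of _ "{p. prime p \<and> int p dvd M}"]) auto
qed

end
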